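(* (i) The formal series $\Lambda(\lambda^{(0)},\nu^{(0)})$ and $\mathcal N(\lambda^{(0)},\nu^{(0)})$ (expanded in $\eta^{-1}$) coincide respectively with $\lambda^{(0)}(t,c-\eta^{-1},\eta)$ and $\nu^{(0)}(t,c-\eta^{-1},\eta)$, the 0-parameter solution of $(H_{\rm II})$ with $c$ replaced by $c-\eta^{-1}$ (re-expanded in $\eta^{-1}$, with the same leading term $\lambda_0(t,c)$). (ii) The formal solution $R$ satisfies $$R(t,c,\eta)-R(t,c-\eta^{-1},\eta)=-\frac{d}{dt}\log\Big\{1+\big(c-\tfrac12\eta^{-1}\big)\frac{\eta^{-1}R(t,c,\eta)-2\lambda^{(0)}(t,c,\eta)}{\big(\nu^{(0)}(t,c,\eta)-\lambda^{(0)}(t,c,\eta)^2-\frac12t\big)^2}\Big\},$$ where $R(t,c-\eta^{-1},\eta)$ is the corresponding formal Riccati solution for the parameter $c-\eta^{-1}$ (re-expanded in $\eta^{-1}$).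
   Context: Let $\eta$ be a large parameter, $c\in\mathbb C\setminus\{0\}$. $(H_{\rm II})$: $\frac{d\lambda}{dt}=\eta\nu$, $\frac{d\nu}{dt}=\eta(2\lambda^3+t\lambda+c)$. Let $\lambda_0(t,c)$ be a branch of the algebraic function $2\lambda_0^3+t\lambda_0+c=0$. The 0-parameter solution is the unique pair of formal power series $\lambda^{(0)}=\sum_{k\ge0}\eta^{-k}\lambda^{(0)}_k(t,c)$, $\nu^{(0)}=\sum_{k\ge0}\eta^{-k}\nu^{(0)}_k(t,c)$ solving $(H_{\rm II})$ formally with $\lambda^{(0)}_0=\lambda_0$, $\nu^{(0)}_0=0$. Set $\Delta=6\lambda_0^2+t$. Let $R=\sum_{k\ge-1}\eta^{-k}R_k$ be the formal solution of $R^2+\frac{dR}{dt}=\eta^2(6(\lambda^{(0)})^2+t)$ with $R_{-1}=\sqrt\Delta$ (fixed branch). The Bäcklund transformation is $\Lambda(\lambda,\nu)=-\lambda+\frac{c-\frac12\eta^{-1}}{\nu-\lambda^2-\frac12t}$, $\mathcal N(\lambda,\nu)=-\nu+\frac{2(c-\frac12\eta^{-1})\lambda}{\nu-\lambda^2-\frac12t}-\Big(\frac{c-\frac12\eta^{-1}}{\nu-\lambda^2-\frac12t}\Big)^2$; it maps solutions of $(H_{\rm II})$ to solutions of the same system with $c$ replaced by $c-\eta^{-1}$. *)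

theory Defs
  imports "HOL-Analysis.Analysis" "HOL-Computational_Algebra.Formal_Power_Series"
begin

text \<open>A formal series in eta^{-1} whose coefficients depend on (t,c) is
represented as a family S :: complex => complex => complex fps, where S t c $ k is the
coefficient of eta^{-k} evaluated at (t,c); the formal variable fps_X stands for eta^{-1}.
Products, quotients (by series with nonzero constant term) etc. are computed pointwise in (t,c),
which agrees with the coefficientwise operations.\<close>

definition fdt :: "(complex \<Rightarrow> complex \<Rightarrow> complex fps) \<Rightarrow> complex \<Rightarrow> complex \<Rightarrow> complex fps" where
  "fdt S t c = Abs_fps (\<lambda>n. deriv (\<lambda>s. fps_nth (S s c) n) t)"

text \<open>Substitution c := c - eta^{-1}, re-expanded in eta^{-1} by Taylor expansion in c:
  coefficient k of S(t, c - eta^{-1}) is sum over j+m=k of (-1)^m/m! d^m/dc^m S_j(t,c).\<close>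
definition cshift :: "(complex \<Rightarrow> complex \<Rightarrow> complex fps) \<Rightarrow> complex \<Rightarrow> complex \<Rightarrow> complex fps" where
  "cshift S t c = Abs_fps (\<lambda>k. \<Sum>m\<le>k. (-1)^m / fact m * (deriv ^^ m) (\<lambda>d. fps_nth (S t d) (k - m)) c)"

definition fdlog :: "(complex \<Rightarrow> complex \<Rightarrow> complex fps) \<Rightarrow> complex \<Rightarrow> complex \<Rightarrow> complex fps" where
  "fdlog S t c = fdt S t c / S t c"

definition chalf :: "complex \<Rightarrow> complex fps" where
  "chalf c = fps_const c - fps_const (1/2) * fps_X"

definition bden :: "complex \<Rightarrow> complex fps \<Rightarrow> complex fps \<Rightarrow> complex fps" where
  "bden t l n = n - l ^ 2 - fps_const (t / 2)"

definition BLambda :: "complex \<Rightarrow> complex \<Rightarrow> complex fps \<Rightarrow> complex fps \<Rightarrow> complex fps" where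
  "BLambda t c l n = - l + chalf c / bden t l n"

definition BN :: "complex \<Rightarrow> complex \<Rightarrow> complex fps \<Rightarrow> complex fps \<Rightarrow> complex fps" where
  "BN t c l n = - n + fps_const 2 * chalf c * l / bden t l n - (chalf c / bden t l n) ^ 2"

text \<open>0-parameter solution of (H_II) (equations multiplied by eta^{-1}):
  eta^{-1} d lambda/dt = nu,  eta^{-1} d nu/dt = 2 lambda^3 + t lambda + c,
  with lambda_0 = l0, nu_0 = 0.\<close>
definition zero_param_solution ::
  "(complex \<times> complex) set \<Rightarrow> (complex \<Rightarrow> complex \<Rightarrow> complex) \<Rightarrow>
   (complex \<Rightarrow> complex \<Rightarrow> complex fps) \<Rightarrow> (complex \<Rightarrow> complex \<Rightarrow> complex fps) \<Rightarrow> bool" where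
  "zero_param_solution U l0 lam nu \<longleftrightarrow>
     (\<forall>(t, c)\<in>U. fps_nth (lam t c) 0 = l0 t c \<and> fps_nth (nu t c) 0 = 0 \<and>
        fps_X * fdt lam t c = nu t c \<and>
        fps_X * fdt nu t c = fps_const 2 * lam t c ^ 3 + fps_const t * lam t c + fps_const c)"

text \<open>Rt represents eta^{-1} R, i.e. Rt t c $ k = R_{k-1}(t,c), so
  R = eta * Rt. The equation R^2 + dR/dt = eta^2 (6 lambda^2 + t) becomes
  Rt^2 + eta^{-1} dRt/dt = 6 lambda^2 + t, with R_{-1} = sq (the fixed branch of sqrt Delta).\<close>
definition riccati_solution ::
  "(complex \<times> complex) set \<Rightarrow> (complex \<Rightarrow> complex \<Rightarrow> complex) \<Rightarrow>
   (complex \<Rightarrow> complex \<Rightarrow> complex fps) \<Rightarrow> (complex \<Rightarrow> complex \<Rightarrow> complex fps) \<Rightarrow> bool" where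
  "riccati_solution U sq lam Rt \<longleftrightarrow>
     (\<forall>(t, c)\<in>U. fps_nth (Rt t c) 0 = sq t c \<and>
        Rt t c ^ 2 + fps_X * fdt Rt t c = fps_const 6 * lam t c ^ 2 + fps_const t)"

definition logarg ::
  "(complex \<Rightarrow> complex \<Rightarrow> complex fps) \<Rightarrow> (complex \<Rightarrow> complex \<Rightarrow> complex fps) \<Rightarrow>
   (complex \<Rightarrow> complex \<Rightarrow> complex fps) \<Rightarrow> complex \<Rightarrow> complex \<Rightarrow> complex fps" where
  "logarg Rt lam nu t c =
     1 + chalf c * (Rt t c - fps_const 2 * lam t c) / (bden t (lam t c) (nu t c)) ^ 2"

end

theory Submission
  imports Defs
begin

text \<open>
  Proof outline. Part (i) and part (ii) are both uniqueness statements in disguise.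

  \<^item> A formal solution of \<open>(H\<^sub>I\<^sub>I)\<close> with leading term \<open>(\<lambda>\<^sub>0, 0)\<close> is unique, since at each order
    the new coefficient of \<open>\<lambda>\<close> is multiplied by \<open>\<Delta> = 6\<lambda>\<^sub>0\<^sup>2 + t \<noteq> 0\<close>; likewise a formal
    Riccati solution with leading term \<open>\<surd>\<Delta>\<close> is unique, the new coefficient being multiplied
    by \<open>2\<surd>\<Delta> \<noteq> 0\<close> (\<open>painleve_system_unique\<close>, \<open>riccati_unique\<close>).
  \<^item> The substitution \<open>c \<mapsto> c - \<eta>\<^sup>-\<^sup>1\<close>, realised as the formal Taylor expansion \<open>cshift\<close>, is a
    ring homomorphism that commutes with \<open>d/dt\<close> and sends \<open>c\<close> to \<open>c - \<eta>\<^sup>-\<^sup>1\<close>. Hence it maps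
    the 0-parameter solution and \<open>R\<close> to solutions of the shifted equations.
  \<^item> A direct computation shows that the Baecklund image of \<open>(\<lambda>\<^sup>(\<^sup>0\<^sup>), \<nu>\<^sup>(\<^sup>0\<^sup>))\<close> solves the shifted
    system, and that \<open>R + d/dt log \<Theta>\<close> (\<open>\<Theta>\<close> the argument of the logarithm) solves the Riccati
    equation for the Baecklund image. Comparing leading terms gives (i) and then (ii).

  Everything rests on the coefficients being sufficiently regular functions of \<open>(t, c)\<close>: we
  introduce the class of \<open>regular\<close> functions generated by \<open>t, c, \<lambda>\<^sub>0, \<surd>\<Delta>\<close> under field
  operations, show it is closed under \<open>\<partial>\<^sub>t\<close> and \<open>\<partial>\<^sub>c\<close> with commuting partials, and prove that all
  coefficients of \<open>\<lambda>\<^sup>(\<^sup>0\<^sup>)\<close>, \<open>\<nu>\<^sup>(\<^sup>0\<^sup>)\<close>, \<open>R\<close> are regular.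
\<close>

lemma fps_mult_nth_vanishing_prefix:
  fixes a b :: "'a::comm_semiring_0 fps"
  assumes "\<forall>i<m. fps_nth a i = 0"
  shows "fps_nth (a * b) m = fps_nth a m * fps_nth b 0"
proof -
  have "fps_nth (a * b) m = (\<Sum>i=0..m. fps_nth a i * fps_nth b (m - i))" by (rule fps_mult_nth)
  also have "\<dots> = (\<Sum>i\<in>{m}. fps_nth a i * fps_nth b (m - i))"
    by (rule sum.mono_neutral_right) (use assms in auto)
  finally show ?thesis by simp
qed

text \<open>This is what makes the
  recursions for the coefficients of formal solutions solvable and their solutions unique.\<close>
lemma fps_square_nth_diff:
  fixes a b :: "'a::comm_ring_1 fps"
  assumes "\<forall>i\<le>k. fps_nth a i = fps_nth b i"
  shows "fps_nth (a ^ 2) (Suc k) - fps_nth (b ^ 2) (Suc k) = 2 * fps_nth a 0 * (fps_nth a (Suc k) - fps_nth b (Suc k))"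
proof -
  have factor: "a ^ 2 - b ^ 2 = (a - b) * (a + b)"
    by (simp add: algebra_simps power2_eq_square)
  have "fps_nth ((a - b) * (a + b)) (Suc k) = fps_nth (a - b) (Suc k) * fps_nth (a + b) 0"
    by (rule fps_mult_nth_vanishing_prefix) (use assms in auto)
  moreover have "fps_nth b 0 = fps_nth a 0" using assms by auto
  ultimately show ?thesis
    by (simp add: factor[symmetric] power2_eq_square algebra_simps)
qed

lemma fps_cube_nth_diff:
  fixes a b :: "'a::comm_ring_1 fps"
  assumes "\<forall>i\<le>k. fps_nth a i = fps_nth b i"
  shows "fps_nth (a ^ 3) (Suc k) - fps_nth (b ^ 3) (Suc k) = 3 * (fps_nth a 0) ^ 2 * (fps_nth a (Suc k) - fps_nth b (Suc k))"
proof -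
  have factor: "a ^ 3 - b ^ 3 = (a - b) * (a ^ 2 + a * b + b ^ 2)"
    by (simp add: algebra_simps power2_eq_square power3_eq_cube)
  have "fps_nth ((a - b) * (a ^ 2 + a * b + b ^ 2)) (Suc k) = fps_nth (a - b) (Suc k) * fps_nth (a ^ 2 + a * b + b ^ 2) 0"
    by (rule fps_mult_nth_vanishing_prefix) (use assms in auto)
  moreover have "fps_nth b 0 = fps_nth a 0" using assms by auto
  ultimately show ?thesis
    by (simp add: factor[symmetric] power2_eq_square power3_eq_cube algebra_simps)
qed

text \<open>The constant term of the logarithm's argument in (ii) does not vanish: with
  \<open>b = \<lambda>\<^sub>0\<^sup>2 + t/2 \<noteq> 0\<close>, \<open>c = -2\<lambda>\<^sub>0b\<close> and \<open>s\<^sup>2 = 6\<lambda>\<^sub>0\<^sup>2 + t\<close>, the equation \<open>b\<^sup>2 + c(s - 2\<lambda>\<^sub>0) = 0\<close>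
  would force \<open>b\<^sup>2 = 0\<close>.\<close>
lemma log_arg_constant_nonzero:
  fixes l s t c b :: complex
  assumes b: "2 * b = 2 * l ^ 2 + t" and b_nz: "b \<noteq> 0" and c: "c = - 2 * l * b"
    and s: "s ^ 2 = 6 * l ^ 2 + t"
  shows "1 + c * (s - 2 * l) * inverse (- b) ^ 2 \<noteq> 0"
proof
  assume "1 + c * (s - 2 * l) * inverse (- b) ^ 2 = 0"
  moreover have "b ^ 2 * (1 + c * (s - 2 * l) * inverse (- b) ^ 2) = b ^ 2 + c * (s - 2 * l)"
    using b_nz by (simp add: power2_eq_square field_simps)
  ultimately have "b ^ 2 + c * (s - 2 * l) = 0" by simp
  then have "b * (b - 2 * l * (s - 2 * l)) = 0" using c by algebra
  then have "b = 2 * l * (s - 2 * l)" using b_nz by simp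
  then have "b ^ 2 = 0" using b s by algebra
  then show False using b_nz by simp
qed

text \<open>The Pascal-triangle step behind the general Leibniz rule
  \<open>D\<^sup>m (S T) = \<Sum>\<^sub>a (m choose a) D\<^sup>a S D\<^sup>m\<^sup>-\<^sup>a T\<close>.\<close>
lemma leibniz_pascal_step:
  fixes F G :: "nat \<Rightarrow> 'a::comm_semiring_1"
  shows "(\<Sum>a\<le>m. of_nat (m choose a) * (F (Suc a) * G (m - a) + F a * G (Suc (m - a)))) =
         (\<Sum>a\<le>Suc m. of_nat (Suc m choose a) * (F a * G (Suc m - a)))"
proof -
  have "(\<Sum>a\<le>m. of_nat (m choose a) * (F a * G (Suc (m - a)))) =
        (\<Sum>a\<le>Suc m. of_nat (m choose a) * (F a * G (Suc m - a)))"
    by (simp add: sum.atMost_Suc binomial_eq_0) (rule sum.cong; simp add: Suc_diff_le)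
  also have "\<dots> = F 0 * G (Suc m) + (\<Sum>a\<le>m. of_nat (m choose Suc a) * (F (Suc a) * G (m - a)))"
    by (subst sum.atMost_Suc_shift) (simp del: sum.atMost_Suc)
  finally have second: "(\<Sum>a\<le>m. of_nat (m choose a) * (F a * G (Suc (m - a)))) =
      F 0 * G (Suc m) + (\<Sum>a\<le>m. of_nat (m choose Suc a) * (F (Suc a) * G (m - a)))" .
  have rhs: "(\<Sum>a\<le>Suc m. of_nat (Suc m choose a) * (F a * G (Suc m - a))) =
      F 0 * G (Suc m) + (\<Sum>a\<le>m. of_nat (m choose a) * (F (Suc a) * G (m - a)))
        + (\<Sum>a\<le>m. of_nat (m choose Suc a) * (F (Suc a) * G (m - a)))"
    by (subst sum.atMost_Suc_shift) (simp del: sum.atMost_Suc add: sum.distrib algebra_simps)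
  show ?thesis
    by (simp only: distrib_left sum.distrib second rhs add_ac)
qed

text \<open>The Taylor coefficients \<open>(-1)\<^sup>m / m!\<close> of the shift \<open>c \<mapsto> c - \<eta>\<^sup>-\<^sup>1\<close>; they turn
  binomial coefficients into products, which makes the shift multiplicative.\<close>
definition shift_coeff :: "nat \<Rightarrow> complex" where
  "shift_coeff m = (-1) ^ m / fact m"

lemma shift_coeff_binomial:
  assumes "i \<le> m"
  shows "shift_coeff m * of_nat (m choose i) = shift_coeff i * shift_coeff (m - i)"
proof -
  have sign: "(-1::complex) ^ m = (-1) ^ i * (-1) ^ (m - i)"
    using assms by (metis le_add_diff_inverse power_add)
  show ?thesis
    unfolding shift_coeff_def sign using assms by (simp add: binomial_fact field_simps)
qed

definition Dt :: "(complex \<Rightarrow> complex \<Rightarrow> complex) \<Rightarrow> complex \<Rightarrow> complex \<Rightarrow> complex" where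
  "Dt f = (\<lambda>t c. deriv (\<lambda>s. f s c) t)"

definition Dc :: "(complex \<Rightarrow> complex \<Rightarrow> complex) \<Rightarrow> complex \<Rightarrow> complex \<Rightarrow> complex" where
  "Dc f = (\<lambda>t c. deriv (\<lambda>d. f t d) c)"

text \<open>A function vanishing near \<open>x\<close> has derivative zero there: the tool for implicit
  differentiation of the algebraic relations defining \<open>\<lambda>\<^sub>0\<close> and \<open>\<surd>\<Delta>\<close>.\<close>
lemma has_field_derivative_locally_zero:
  assumes "(g has_field_derivative D) (at x)" "eventually (\<lambda>s. g s = 0) (nhds x)"
  shows "D = 0"
proof -
  have "((\<lambda>s. 0) has_field_derivative D) (at x)"
    using DERIV_cong_ev[of x x g "\<lambda>s. 0" D D] assms by simp
  then show ?thesis using DERIV_const DERIV_unique by blast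
qed

lemma field_differentiable_cong_ev:
  assumes "eventually (\<lambda>s. f s = g s) (nhds x)" "g field_differentiable (at x)"
  shows "f field_differentiable (at x)"
  using assms DERIV_cong_ev[of x x f g] unfolding field_differentiable_def by auto

lemma eventually_in_open_t:
  assumes "open U" "(t, c) \<in> U"
  shows "eventually (\<lambda>s. (s, c) \<in> U) (nhds t)"
proof -
  have "((\<lambda>s. (s, c)) \<longlongrightarrow> (t, c)) (nhds t)"
    by (intro tendsto_Pair filterlim_ident tendsto_const)
  from topological_tendstoD[OF this assms] show ?thesis .
qed

lemma eventually_in_open_c:
  assumes "open U" "(t, c) \<in> U"
  shows "eventually (\<lambda>d. (t, d) \<in> U) (nhds c)"
proof -
  have "((\<lambda>d. (t, d)) \<longlongrightarrow> (t, c)) (nhds c)"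
    by (intro tendsto_Pair filterlim_ident tendsto_const)
  from topological_tendstoD[OF this assms] show ?thesis .
qed

section \<open>Regular functions of \<open>(t, c)\<close>\<close>

locale cubic_branch =
  fixes U :: "(complex \<times> complex) set" and l0 sq :: "complex \<Rightarrow> complex \<Rightarrow> complex"
  assumes open_U: "open U"
    and c_nonzero: "\<And>t c. (t, c) \<in> U \<Longrightarrow> c \<noteq> 0"
    and l0_diff_t: "\<And>t c. (t, c) \<in> U \<Longrightarrow> (\<lambda>s. l0 s c) field_differentiable (at t)"
    and l0_diff_c: "\<And>t c. (t, c) \<in> U \<Longrightarrow> (\<lambda>d. l0 t d) field_differentiable (at c)"
    and l0_cubic: "\<And>t c. (t, c) \<in> U \<Longrightarrow> 2 * l0 t c ^ 3 + t * l0 t c + c = 0"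
    and Delta_nonzero: "\<And>t c. (t, c) \<in> U \<Longrightarrow> 6 * l0 t c ^ 2 + t \<noteq> 0"
    and sq_diff_t: "\<And>t c. (t, c) \<in> U \<Longrightarrow> (\<lambda>s. sq s c) field_differentiable (at t)"
    and sq_diff_c: "\<And>t c. (t, c) \<in> U \<Longrightarrow> (\<lambda>d. sq t d) field_differentiable (at c)"
    and sq_square: "\<And>t c. (t, c) \<in> U \<Longrightarrow> sq t c ^ 2 = 6 * l0 t c ^ 2 + t"
begin

definition Delta :: "complex \<Rightarrow> complex \<Rightarrow> complex" where
  "Delta t c = 6 * l0 t c ^ 2 + t"

lemma Delta_eq_0_iff [simp]: "(t, c) \<in> U \<Longrightarrow> Delta t c = 0 \<longleftrightarrow> False"
  using Delta_nonzero by (simp add: Delta_def)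

lemma sq_eq_0_iff [simp]: "(t, c) \<in> U \<Longrightarrow> sq t c = 0 \<longleftrightarrow> False"
  using Delta_nonzero sq_square by fastforce

lemma eventually_U_t: "(t, c) \<in> U \<Longrightarrow> eventually (\<lambda>s. (s, c) \<in> U) (nhds t)"
  using eventually_in_open_t open_U by blast

lemma eventually_U_c: "(t, c) \<in> U \<Longrightarrow> eventually (\<lambda>d. (t, d) \<in> U) (nhds c)"
  using eventually_in_open_c open_U by blast

lemma Dt_congI:
  "(\<And>t c. (t, c) \<in> U \<Longrightarrow> f t c = g t c) \<Longrightarrow> (t, c) \<in> U \<Longrightarrow> Dt f t c = Dt g t c"
  unfolding Dt_def by (rule deriv_cong_ev) (auto elim!: eventually_mono[OF eventually_U_t])

lemma Dc_congI:
  "(\<And>t c. (t, c) \<in> U \<Longrightarrow> f t c = g t c) \<Longrightarrow> (t, c) \<in> U \<Longrightarrow> Dc f t c = Dc g t c"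
  unfolding Dc_def by (rule deriv_cong_ev) (auto elim!: eventually_mono[OF eventually_U_c])

text \<open>All coefficients of the formal series in the
  theorem are of this kind (up to their values off \<open>U\<close>); the class is closed under \<open>\<partial>\<^sub>t\<close>
  and \<open>\<partial>\<^sub>c\<close>, and the two partial derivatives commute on it.\<close>
inductive_set reg_gen :: "(complex \<Rightarrow> complex \<Rightarrow> complex) set" where
  const: "(\<lambda>t c. k) \<in> reg_gen"
| var_t: "(\<lambda>t c. t) \<in> reg_gen"
| var_c: "(\<lambda>t c. c) \<in> reg_gen"
| branch: "l0 \<in> reg_gen"
| root: "sq \<in> reg_gen"
| add: "f \<in> reg_gen \<Longrightarrow> g \<in> reg_gen \<Longrightarrow> (\<lambda>t c. f t c + g t c) \<in> reg_gen"
| mult: "f \<in> reg_gen \<Longrightarrow> g \<in> reg_gen \<Longrightarrow> (\<lambda>t c. f t c * g t c) \<in> reg_gen"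
| inverse: "f \<in> reg_gen \<Longrightarrow> (\<forall>t c. (t, c) \<in> U \<longrightarrow> f t c \<noteq> 0) \<Longrightarrow>
    (\<lambda>t c. inverse (f t c)) \<in> reg_gen"

lemma reg_gen_differentiable:
  "f \<in> reg_gen \<Longrightarrow> (t, c) \<in> U \<Longrightarrow>
     (\<lambda>s. f s c) field_differentiable (at t) \<and> (\<lambda>d. f t d) field_differentiable (at c)"
proof (induction arbitrary: t c rule: reg_gen.induct)
  case (inverse f)
  then show ?case by (auto intro!: field_differentiable_inverse)
qed (auto intro!: field_differentiable_add field_differentiable_mult l0_diff_t l0_diff_c
       sq_diff_t sq_diff_c field_differentiable_ident field_differentiable_const)

definition regular :: "(complex \<Rightarrow> complex \<Rightarrow> complex) \<Rightarrow> bool" where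
  "regular f \<longleftrightarrow> (\<exists>g\<in>reg_gen. \<forall>t c. (t, c) \<in> U \<longrightarrow> f t c = g t c)"

lemma regular_cong: "(\<And>t c. (t, c) \<in> U \<Longrightarrow> f t c = g t c) \<Longrightarrow> regular g \<Longrightarrow> regular f"
  unfolding regular_def by auto

lemma regular_diff_t:
  assumes "regular f" "(t, c) \<in> U"
  shows "(\<lambda>s. f s c) field_differentiable (at t)"
proof -
  obtain g where g: "g \<in> reg_gen" "\<forall>t c. (t, c) \<in> U \<longrightarrow> f t c = g t c"
    using assms(1) unfolding regular_def by blast
  have "eventually (\<lambda>s. f s c = g s c) (nhds t)"
    using eventually_U_t[OF assms(2)] g(2) by (auto elim!: eventually_mono)
  then show ?thesis
    by (rule field_differentiable_cong_ev) (use reg_gen_differentiable[OF g(1) assms(2)] in blast)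
qed

lemma regular_diff_c:
  assumes "regular f" "(t, c) \<in> U"
  shows "(\<lambda>d. f t d) field_differentiable (at c)"
proof -
  obtain g where g: "g \<in> reg_gen" "\<forall>t c. (t, c) \<in> U \<longrightarrow> f t c = g t c"
    using assms(1) unfolding regular_def by blast
  have "eventually (\<lambda>d. f t d = g t d) (nhds c)"
    using eventually_U_c[OF assms(2)] g(2) by (auto elim!: eventually_mono)
  then show ?thesis
    by (rule field_differentiable_cong_ev) (use reg_gen_differentiable[OF g(1) assms(2)] in blast)
qed

lemma reg_gen_regular: "f \<in> reg_gen \<Longrightarrow> regular f"
  unfolding regular_def by blast

lemma regular_const [simp]: "regular (\<lambda>t c. k)"
  and regular_var_t [simp]: "regular (\<lambda>t c. t)"
  and regular_var_c [simp]: "regular (\<lambda>t c. c)"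
  and regular_l0 [simp]: "regular l0"
  and regular_sq [simp]: "regular sq"
  by (auto intro: reg_gen_regular reg_gen.intros)

lemma regular_add [simp]:
  assumes "regular f" "regular g"
  shows "regular (\<lambda>t c. f t c + g t c)"
proof -
  obtain f' g' where "f' \<in> reg_gen" "g' \<in> reg_gen"
    and "\<forall>t c. (t, c) \<in> U \<longrightarrow> f t c = f' t c" "\<forall>t c. (t, c) \<in> U \<longrightarrow> g t c = g' t c"
    using assms unfolding regular_def by blast
  then show ?thesis
    unfolding regular_def by (intro bexI[of _ "\<lambda>t c. f' t c + g' t c"] reg_gen.add) auto
qed

lemma regular_mult [simp]:
  assumes "regular f" "regular g"
  shows "regular (\<lambda>t c. f t c * g t c)"
proof -
  obtain f' g' where "f' \<in> reg_gen" "g' \<in> reg_gen"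
    and "\<forall>t c. (t, c) \<in> U \<longrightarrow> f t c = f' t c" "\<forall>t c. (t, c) \<in> U \<longrightarrow> g t c = g' t c"
    using assms unfolding regular_def by blast
  then show ?thesis
    unfolding regular_def by (intro bexI[of _ "\<lambda>t c. f' t c * g' t c"] reg_gen.mult) auto
qed

lemma regular_inverse [simp]:
  assumes "regular f" "\<forall>t c. (t, c) \<in> U \<longrightarrow> f t c \<noteq> 0"
  shows "regular (\<lambda>t c. inverse (f t c))"
proof -
  obtain f' where "f' \<in> reg_gen" "\<forall>t c. (t, c) \<in> U \<longrightarrow> f t c = f' t c"
    using assms(1) unfolding regular_def by blast
  with assms(2) show ?thesis
    unfolding regular_def by (intro bexI[of _ "\<lambda>t c. inverse (f' t c)"] reg_gen.inverse) auto
qed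

lemma regular_minus [simp]: "regular f \<Longrightarrow> regular (\<lambda>t c. - f t c)"
  using regular_mult[of "\<lambda>t c. -1" f] by simp

lemma regular_diff [simp]: "regular f \<Longrightarrow> regular g \<Longrightarrow> regular (\<lambda>t c. f t c - g t c)"
  using regular_add[of f "\<lambda>t c. - g t c"] by simp

lemma regular_divide [simp]:
  "regular f \<Longrightarrow> regular g \<Longrightarrow> \<forall>t c. (t, c) \<in> U \<longrightarrow> g t c \<noteq> 0 \<Longrightarrow> regular (\<lambda>t c. f t c / g t c)"
  using regular_mult[of f "\<lambda>t c. inverse (g t c)"] by (simp add: divide_inverse)

lemma regular_power [simp]: "regular f \<Longrightarrow> regular (\<lambda>t c. f t c ^ n)"
  by (induction n) auto

lemma regular_sum [simp]: "(\<And>i. i \<in> A \<Longrightarrow> regular (g i)) \<Longrightarrow> regular (\<lambda>t c. \<Sum>i\<in>A. g i t c)"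
  by (induction A rule: infinite_finite_induct) auto

lemma regular_if [simp]: "regular f \<Longrightarrow> regular g \<Longrightarrow> regular (\<lambda>t c. if P then f t c else g t c)"
  by (cases P) auto

lemma regular_Delta [simp]: "regular Delta"
  unfolding Delta_def[abs_def] by simp

lemma Dt_add [simp]: "regular f \<Longrightarrow> regular g \<Longrightarrow> (t, c) \<in> U \<Longrightarrow>
    Dt (\<lambda>t c. f t c + g t c) t c = Dt f t c + Dt g t c"
  and Dt_diff [simp]: "regular f \<Longrightarrow> regular g \<Longrightarrow> (t, c) \<in> U \<Longrightarrow>
    Dt (\<lambda>t c. f t c - g t c) t c = Dt f t c - Dt g t c"
  and Dt_minus [simp]: "regular f \<Longrightarrow> (t, c) \<in> U \<Longrightarrow> Dt (\<lambda>t c. - f t c) t c = - Dt f t c"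
  and Dt_mult [simp]: "regular f \<Longrightarrow> regular g \<Longrightarrow> (t, c) \<in> U \<Longrightarrow>
    Dt (\<lambda>t c. f t c * g t c) t c = Dt f t c * g t c + f t c * Dt g t c"
  and Dt_inverse [simp]: "regular f \<Longrightarrow> (t, c) \<in> U \<Longrightarrow> f t c \<noteq> 0 \<Longrightarrow>
    Dt (\<lambda>t c. inverse (f t c)) t c = - Dt f t c / f t c ^ 2"
  and Dt_divide [simp]: "regular f \<Longrightarrow> regular g \<Longrightarrow> (t, c) \<in> U \<Longrightarrow> g t c \<noteq> 0 \<Longrightarrow>
    Dt (\<lambda>t c. f t c / g t c) t c = (Dt f t c * g t c - f t c * Dt g t c) / g t c ^ 2"
  by (simp_all add: Dt_def regular_diff_t)

lemma Dc_add [simp]: "regular f \<Longrightarrow> regular g \<Longrightarrow> (t, c) \<in> U \<Longrightarrow>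
    Dc (\<lambda>t c. f t c + g t c) t c = Dc f t c + Dc g t c"
  and Dc_diff [simp]: "regular f \<Longrightarrow> regular g \<Longrightarrow> (t, c) \<in> U \<Longrightarrow>
    Dc (\<lambda>t c. f t c - g t c) t c = Dc f t c - Dc g t c"
  and Dc_minus [simp]: "regular f \<Longrightarrow> (t, c) \<in> U \<Longrightarrow> Dc (\<lambda>t c. - f t c) t c = - Dc f t c"
  and Dc_mult [simp]: "regular f \<Longrightarrow> regular g \<Longrightarrow> (t, c) \<in> U \<Longrightarrow>
    Dc (\<lambda>t c. f t c * g t c) t c = Dc f t c * g t c + f t c * Dc g t c"
  and Dc_inverse [simp]: "regular f \<Longrightarrow> (t, c) \<in> U \<Longrightarrow> f t c \<noteq> 0 \<Longrightarrow>
    Dc (\<lambda>t c. inverse (f t c)) t c = - Dc f t c / f t c ^ 2"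
  and Dc_divide [simp]: "regular f \<Longrightarrow> regular g \<Longrightarrow> (t, c) \<in> U \<Longrightarrow> g t c \<noteq> 0 \<Longrightarrow>
    Dc (\<lambda>t c. f t c / g t c) t c = (Dc f t c * g t c - f t c * Dc g t c) / g t c ^ 2"
  by (simp_all add: Dc_def regular_diff_c)

lemma Dt_power [simp]:
  assumes "regular f" "(t, c) \<in> U"
  shows "Dt (\<lambda>t c. f t c ^ n) t c = of_nat n * f t c ^ (n - 1) * Dt f t c"
  using DERIV_imp_deriv[OF DERIV_power[OF field_differentiable_derivI[OF regular_diff_t[OF assms]]], of n]
  by (simp add: Dt_def mult_ac)

lemma Dc_power [simp]:
  assumes "regular f" "(t, c) \<in> U"
  shows "Dc (\<lambda>t c. f t c ^ n) t c = of_nat n * f t c ^ (n - 1) * Dc f t c"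
  using DERIV_imp_deriv[OF DERIV_power[OF field_differentiable_derivI[OF regular_diff_c[OF assms]]], of n]
  by (simp add: Dc_def mult_ac)

lemma Dt_c_only [simp]: "Dt (\<lambda>t c. F c) t c = 0"
  and Dt_var_t [simp]: "Dt (\<lambda>t c. t) t c = 1"
  and Dc_t_only [simp]: "Dc (\<lambda>t c. F t) t c = 0"
  and Dc_var_c [simp]: "Dc (\<lambda>t c. c) t c = 1"
  by (simp_all add: Dt_def Dc_def)

lemma Dt_sum [simp]: "(\<And>i. i \<in> A \<Longrightarrow> regular (g i)) \<Longrightarrow> (t, c) \<in> U \<Longrightarrow>
    Dt (\<lambda>t c. \<Sum>i\<in>A. g i t c) t c = (\<Sum>i\<in>A. Dt (g i) t c)"
proof (induction A rule: infinite_finite_induct)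
  case (insert x F)
  have "Dt (\<lambda>t c. \<Sum>i\<in>insert x F. g i t c) t c = Dt (\<lambda>t c. g x t c + (\<Sum>i\<in>F. g i t c)) t c"
    using insert by simp
  also have "\<dots> = Dt (g x) t c + Dt (\<lambda>t c. \<Sum>i\<in>F. g i t c) t c"
    using insert by (intro Dt_add) auto
  finally show ?case using insert by simp
qed (simp_all add: Dt_def)

lemma Dc_sum [simp]: "(\<And>i. i \<in> A \<Longrightarrow> regular (g i)) \<Longrightarrow> (t, c) \<in> U \<Longrightarrow>
    Dc (\<lambda>t c. \<Sum>i\<in>A. g i t c) t c = (\<Sum>i\<in>A. Dc (g i) t c)"
proof (induction A rule: infinite_finite_induct)
  case (insert x F)
  have "Dc (\<lambda>t c. \<Sum>i\<in>insert x F. g i t c) t c = Dc (\<lambda>t c. g x t c + (\<Sum>i\<in>F. g i t c)) t c"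
    using insert by simp
  also have "\<dots> = Dc (g x) t c + Dc (\<lambda>t c. \<Sum>i\<in>F. g i t c) t c"
    using insert by (intro Dc_add) auto
  finally show ?case using insert by simp
qed (simp_all add: Dc_def)

lemma Dt_l0 [simp]:
  assumes "(t, c) \<in> U"
  shows "Dt l0 t c = - l0 t c / Delta t c"
proof -
  define L where "L = Dt l0 t c"
  have "((\<lambda>s. l0 s c) has_field_derivative L) (at t)"
    unfolding L_def Dt_def using l0_diff_t[OF assms] by (simp add: field_differentiable_derivI)
  then have "((\<lambda>s. 2 * l0 s c ^ 3 + s * l0 s c + c) has_field_derivative
      (2 * (of_nat 3 * L * l0 t c ^ 2) + (1 * l0 t c + t * L) + 0)) (at t)"
    by (auto intro!: derivative_eq_intros simp: algebra_simps)
  moreover have "eventually (\<lambda>s. 2 * l0 s c ^ 3 + s * l0 s c + c = 0) (nhds t)"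
    using eventually_U_t[OF assms] by (auto elim!: eventually_mono intro: l0_cubic)
  ultimately have "2 * (of_nat 3 * L * l0 t c ^ 2) + (1 * l0 t c + t * L) + 0 = 0"
    by (rule has_field_derivative_locally_zero)
  then have "L * Delta t c + l0 t c = 0"
    by (simp add: Delta_def algebra_simps)
  then show ?thesis
    using assms unfolding L_def[symmetric] by (simp add: field_simps eq_neg_iff_add_eq_0)
qed

lemma Dc_l0 [simp]:
  assumes "(t, c) \<in> U"
  shows "Dc l0 t c = - 1 / Delta t c"
proof -
  define L where "L = Dc l0 t c"
  have "((\<lambda>d. l0 t d) has_field_derivative L) (at c)"
    unfolding L_def Dc_def using l0_diff_c[OF assms] by (simp add: field_differentiable_derivI)
  then have "((\<lambda>d. 2 * l0 t d ^ 3 + t * l0 t d + d) has_field_derivative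
      (2 * (of_nat 3 * L * l0 t c ^ 2) + t * L + 1)) (at c)"
    by (auto intro!: derivative_eq_intros simp: algebra_simps)
  moreover have "eventually (\<lambda>d. 2 * l0 t d ^ 3 + t * l0 t d + d = 0) (nhds c)"
    using eventually_U_c[OF assms] by (auto elim!: eventually_mono intro: l0_cubic)
  ultimately have "2 * (of_nat 3 * L * l0 t c ^ 2) + t * L + 1 = 0"
    by (rule has_field_derivative_locally_zero)
  then have "L * Delta t c + 1 = 0"
    by (simp add: Delta_def algebra_simps)
  then show ?thesis
    using assms unfolding L_def[symmetric] by (simp add: field_simps eq_neg_iff_add_eq_0)
qed

lemma Delta_fun: "Delta = (\<lambda>t c. 6 * l0 t c ^ 2 + t)"
  by (intro ext) (simp add: Delta_def)

lemma Dt_Delta [simp]: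
  assumes "(t, c) \<in> U"
  shows "Dt Delta t c = 1 - 12 * l0 t c ^ 2 / Delta t c"
proof -
  have "Dt Delta t c = Dt (\<lambda>t c. 6 * l0 t c ^ 2 + t) t c" by (simp add: Delta_fun)
  also have "\<dots> = 1 - 12 * l0 t c ^ 2 / Delta t c"
    using assms by (simp add: field_simps power2_eq_square)
  finally show ?thesis .
qed

lemma Dc_Delta [simp]:
  assumes "(t, c) \<in> U"
  shows "Dc Delta t c = - 12 * l0 t c / Delta t c"
proof -
  have "Dc Delta t c = Dc (\<lambda>t c. 6 * l0 t c ^ 2 + t) t c" by (simp add: Delta_fun)
  also have "\<dots> = - 12 * l0 t c / Delta t c"
    using assms by (simp add: field_simps power2_eq_square)
  finally show ?thesis .
qed

lemma Dt_sq [simp]: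
  assumes "(t, c) \<in> U"
  shows "Dt sq t c = (1 - 12 * l0 t c ^ 2 / Delta t c) / (2 * sq t c)"
proof -
  define L where "L = Dt sq t c"
  have "((\<lambda>s. sq s c) has_field_derivative L) (at t)"
    unfolding L_def Dt_def using sq_diff_t[OF assms] by (simp add: field_differentiable_derivI)
  moreover have "((\<lambda>s. Delta s c) has_field_derivative Dt Delta t c) (at t)"
    unfolding Dt_def using regular_diff_t[OF regular_Delta assms]
    by (simp add: field_differentiable_derivI)
  ultimately have "((\<lambda>s. sq s c ^ 2 - Delta s c) has_field_derivative
      (2 * L * sq t c - Dt Delta t c)) (at t)"
    by (auto intro!: derivative_eq_intros)
  moreover have "eventually (\<lambda>s. sq s c ^ 2 - Delta s c = 0) (nhds t)"
    using eventually_U_t[OF assms] by (auto elim!: eventually_mono simp: sq_square Delta_def)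
  ultimately have "2 * L * sq t c - Dt Delta t c = 0"
    by (rule has_field_derivative_locally_zero)
  then have "L * (2 * sq t c) = 1 - 12 * l0 t c ^ 2 / Delta t c"
    using assms by (simp add: algebra_simps)
  then show ?thesis using assms unfolding L_def[symmetric] by (simp add: field_simps)
qed

lemma Dc_sq [simp]:
  assumes "(t, c) \<in> U"
  shows "Dc sq t c = - 6 * l0 t c / (Delta t c * sq t c)"
proof -
  define L where "L = Dc sq t c"
  have "((\<lambda>d. sq t d) has_field_derivative L) (at c)"
    unfolding L_def Dc_def using sq_diff_c[OF assms] by (simp add: field_differentiable_derivI)
  moreover have "((\<lambda>d. Delta t d) has_field_derivative Dc Delta t c) (at c)"
    unfolding Dc_def using regular_diff_c[OF regular_Delta assms]
    by (simp add: field_differentiable_derivI)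
  ultimately have "((\<lambda>d. sq t d ^ 2 - Delta t d) has_field_derivative
      (2 * L * sq t c - Dc Delta t c)) (at c)"
    by (auto intro!: derivative_eq_intros)
  moreover have "eventually (\<lambda>d. sq t d ^ 2 - Delta t d = 0) (nhds c)"
    using eventually_U_c[OF assms] by (auto elim!: eventually_mono simp: sq_square Delta_def)
  ultimately have "2 * L * sq t c - Dc Delta t c = 0"
    by (rule has_field_derivative_locally_zero)
  then have "L * (2 * sq t c) = - 12 * l0 t c / Delta t c"
    using assms by (simp add: algebra_simps eq_neg_iff_add_eq_0)
  then show ?thesis using assms unfolding L_def[symmetric] by (simp add: field_simps)
qed

lemma reg_gen_partials_regular: "f \<in> reg_gen \<Longrightarrow> regular (Dt f) \<and> regular (Dc f)"
proof (induction rule: reg_gen.induct)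
  case branch show ?case
    by (intro conjI regular_cong[OF Dt_l0] regular_cong[OF Dc_l0]) auto
next
  case root show ?case
    by (intro conjI regular_cong[OF Dt_sq] regular_cong[OF Dc_sq]) auto
next
  case (add f g)
  then have "regular f" "regular g" by (auto intro: reg_gen_regular)
  with add show ?case
    by (intro conjI regular_cong[OF Dt_add] regular_cong[OF Dc_add]) auto
next
  case (mult f g)
  then have "regular f" "regular g" by (auto intro: reg_gen_regular)
  with mult show ?case
    by (intro conjI regular_cong[OF Dt_mult] regular_cong[OF Dc_mult]) auto
next
  case (inverse f)
  then have "regular f" by (auto intro: reg_gen_regular)
  with inverse show ?case
    by (intro conjI regular_cong[OF Dt_inverse] regular_cong[OF Dc_inverse]) auto
qed (simp_all add: Dt_def Dc_def)

lemma regular_Dt [simp]: "regular f \<Longrightarrow> regular (Dt f)"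
  and regular_Dc [simp]: "regular f \<Longrightarrow> regular (Dc f)"
  unfolding regular_def[of f]
  by (auto intro: regular_cong[OF Dt_congI] regular_cong[OF Dc_congI]
           dest: reg_gen_partials_regular)

lemma l0_partials_commute:
  assumes "(t, c) \<in> U"
  shows "Dt (Dc l0) t c = Dc (Dt l0) t c"
proof -
  have lhs: "Dt (Dc l0) t c = Dt (\<lambda>t c. - 1 / Delta t c) t c"
    by (rule Dt_congI) (simp_all add: assms)
  have rhs: "Dc (Dt l0) t c = Dc (\<lambda>t c. - l0 t c / Delta t c) t c"
    by (rule Dc_congI) (simp_all add: assms)
  show ?thesis using assms by (simp add: lhs rhs field_simps power2_eq_square)
qed

lemma sq_partials_commute:
  assumes "(t, c) \<in> U"
  shows "Dt (Dc sq) t c = Dc (Dt sq) t c"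
proof -
  have lhs: "Dt (Dc sq) t c = Dt (\<lambda>t c. - 6 * l0 t c / (Delta t c * sq t c)) t c"
    by (rule Dt_congI) (simp_all add: assms)
  have rhs: "Dc (Dt sq) t c = Dc (\<lambda>t c. (1 - 12 * l0 t c ^ 2 / Delta t c) / (2 * sq t c)) t c"
    by (rule Dc_congI) (simp_all add: assms)
  have "Delta t c = sq t c ^ 2" using sq_square[OF assms] by (simp add: Delta_def)
  then show ?thesis using assms by (simp add: lhs rhs) (simp add: field_simps)
qed

lemma reg_gen_partials_commute:
  "f \<in> reg_gen \<Longrightarrow> (t, c) \<in> U \<Longrightarrow> Dt (Dc f) t c = Dc (Dt f) t c"
proof (induction arbitrary: t c rule: reg_gen.induct)
  case branch
  then show ?case by (rule l0_partials_commute)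
next
  case root
  then show ?case by (rule sq_partials_commute)
next
  case (add f g)
  then have reg: "regular f" "regular g" by (auto intro: reg_gen_regular)
  have lhs: "Dt (Dc (\<lambda>t c. f t c + g t c)) t c = Dt (\<lambda>t c. Dc f t c + Dc g t c) t c"
    by (rule Dt_congI) (use reg add in auto)
  have rhs: "Dc (Dt (\<lambda>t c. f t c + g t c)) t c = Dc (\<lambda>t c. Dt f t c + Dt g t c) t c"
    by (rule Dc_congI) (use reg add in auto)
  show ?case using reg add by (simp add: lhs rhs)
next
  case (mult f g)
  then have reg: "regular f" "regular g" by (auto intro: reg_gen_regular)
  have lhs: "Dt (Dc (\<lambda>t c. f t c * g t c)) t c = Dt (\<lambda>t c. Dc f t c * g t c + f t c * Dc g t c) t c"
    by (rule Dt_congI) (use reg mult in auto)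
  have rhs: "Dc (Dt (\<lambda>t c. f t c * g t c)) t c = Dc (\<lambda>t c. Dt f t c * g t c + f t c * Dt g t c) t c"
    by (rule Dc_congI) (use reg mult in auto)
  show ?case using reg mult by (simp add: lhs rhs algebra_simps)
next
  case (inverse f)
  then have reg: "regular f" by (auto intro: reg_gen_regular)
  have lhs: "Dt (Dc (\<lambda>t c. inverse (f t c))) t c = Dt (\<lambda>t c. - Dc f t c / f t c ^ 2) t c"
    by (rule Dt_congI) (use reg inverse in auto)
  have rhs: "Dc (Dt (\<lambda>t c. inverse (f t c))) t c = Dc (\<lambda>t c. - Dt f t c / f t c ^ 2) t c"
    by (rule Dc_congI) (use reg inverse in auto)
  show ?case using reg inverse by (simp add: lhs rhs algebra_simps)
qed (simp_all add: Dt_def Dc_def)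

lemma regular_partials_commute:
  assumes "regular f" "(t, c) \<in> U"
  shows "Dt (Dc f) t c = Dc (Dt f) t c"
proof -
  obtain g where g: "g \<in> reg_gen" "\<And>t c. (t, c) \<in> U \<Longrightarrow> f t c = g t c"
    using assms(1) unfolding regular_def by blast
  have "Dt (Dc f) t c = Dt (Dc g) t c"
    by (intro Dt_congI Dc_congI g assms(2))
  also have "\<dots> = Dc (Dt g) t c" using reg_gen_partials_commute g assms by blast
  also have "\<dots> = Dc (Dt f) t c"
    by (intro Dc_congI Dt_congI) (use g assms(2) in auto)
  finally show ?thesis .
qed

section \<open>Families of formal series with regular coefficients\<close>

definition regular_series :: "(complex \<Rightarrow> complex \<Rightarrow> complex fps) \<Rightarrow> bool" where
  "regular_series S \<longleftrightarrow> (\<forall>n. regular (\<lambda>t c. fps_nth (S t c) n))"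

lemma regular_series_nth [simp]: "regular_series S \<Longrightarrow> regular (\<lambda>t c. fps_nth (S t c) n)"
  unfolding regular_series_def by blast

lemma regular_seriesI: "(\<And>n. regular (\<lambda>t c. fps_nth (S t c) n)) \<Longrightarrow> regular_series S"
  unfolding regular_series_def by blast

lemma regular_series_add [simp]: "regular_series S \<Longrightarrow> regular_series T \<Longrightarrow> regular_series (\<lambda>t c. S t c + T t c)"
  and regular_series_diff [simp]: "regular_series S \<Longrightarrow> regular_series T \<Longrightarrow> regular_series (\<lambda>t c. S t c - T t c)"
  and regular_series_mult [simp]: "regular_series S \<Longrightarrow> regular_series T \<Longrightarrow> regular_series (\<lambda>t c. S t c * T t c)"
  and regular_series_fps_const [simp]: "regular f \<Longrightarrow> regular_series (\<lambda>t c. fps_const (f t c))"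
  and regular_series_const [simp]: "regular_series (\<lambda>t c. K)"
  by (auto intro!: regular_seriesI simp: fps_mult_nth)

lemma regular_series_power [simp]: "regular_series S \<Longrightarrow> regular_series (\<lambda>t c. S t c ^ n)"
  by (induction n) (simp_all add: regular_series_mult[of S "\<lambda>t c. S t c ^ _", simplified])

lemma regular_series_chalf [simp]: "regular_series (\<lambda>t c. chalf c)"
proof (rule regular_seriesI)
  fix n
  have coeffs: "(\<lambda>t c. fps_nth (chalf c) n) = (\<lambda>t c. if n = 0 then c else if n = 1 then - 1/2 else 0)"
    by (auto simp: chalf_def)
  show "regular (\<lambda>t c. fps_nth (chalf c) n)" unfolding coeffs by simp
qed

text \<open>The coefficients of \<open>1/S\<close> are given recursively by the coefficients of \<open>S\<close> and the
  inverse of its constant term.\<close>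
lemma regular_series_inverse [simp]:
  assumes "regular_series S" "\<forall>t c. (t, c) \<in> U \<longrightarrow> fps_nth (S t c) 0 \<noteq> 0"
  shows "regular_series (\<lambda>t c. inverse (S t c))"
proof (rule regular_seriesI)
  fix n show "regular (\<lambda>t c. fps_nth (inverse (S t c)) n)"
  proof (induction n rule: less_induct)
    case (less n)
    show ?case
    proof (cases n)
      case 0
      then show ?thesis using assms by (simp add: fps_inverse_def)
    next
      case (Suc m)
      then have "(\<lambda>t c. fps_nth (inverse (S t c)) n) = (\<lambda>t c. - inverse (fps_nth (S t c) 0) *
          (\<Sum>i\<in>{1..n}. fps_nth (S t c) i * fps_nth (inverse (S t c)) (n - i)))"
        by (simp add: fps_inverse_def)
      moreover have "regular (\<lambda>t c. \<Sum>i\<in>{1..n}. fps_nth (S t c) i * fps_nth (inverse (S t c)) (n - i))"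
        using less Suc assms(1) by (intro regular_sum regular_mult) auto
      ultimately show ?thesis using assms by simp
    qed
  qed
qed

lemma fdt_nth: "fps_nth (fdt S t c) n = Dt (\<lambda>t c. fps_nth (S t c) n) t c"
  by (simp add: fdt_def Dt_def)

lemma regular_series_fdt [simp]: "regular_series S \<Longrightarrow> regular_series (fdt S)"
  by (rule regular_seriesI) (simp add: fdt_nth[abs_def])

lemma fdt_congI:
  "(\<And>t c. (t, c) \<in> U \<Longrightarrow> S t c = T t c) \<Longrightarrow> (t, c) \<in> U \<Longrightarrow> fdt S t c = fdt T t c"
  unfolding fps_eq_iff fdt_nth by (auto intro!: Dt_congI)

lemma fdt_add [simp]: "regular_series S \<Longrightarrow> regular_series T \<Longrightarrow> (t, c) \<in> U \<Longrightarrow>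
    fdt (\<lambda>t c. S t c + T t c) t c = fdt S t c + fdt T t c"
  and fdt_diff [simp]: "regular_series S \<Longrightarrow> regular_series T \<Longrightarrow> (t, c) \<in> U \<Longrightarrow>
    fdt (\<lambda>t c. S t c - T t c) t c = fdt S t c - fdt T t c"
  and fdt_minus [simp]: "regular_series S \<Longrightarrow> (t, c) \<in> U \<Longrightarrow> fdt (\<lambda>t c. - S t c) t c = - fdt S t c"
  and fdt_mult [simp]: "regular_series S \<Longrightarrow> regular_series T \<Longrightarrow> (t, c) \<in> U \<Longrightarrow>
    fdt (\<lambda>t c. S t c * T t c) t c = fdt S t c * T t c + S t c * fdt T t c"
  and fdt_fps_const [simp]: "regular f \<Longrightarrow> (t, c) \<in> U \<Longrightarrow>
    fdt (\<lambda>t c. fps_const (f t c)) t c = fps_const (Dt f t c)"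
  and fdt_c_only [simp]: "fdt (\<lambda>t c. F c) t c = 0"
  by (simp_all add: fps_eq_iff fdt_nth fps_mult_nth sum.distrib)

text \<open>The derivative of \<open>1/S\<close>, obtained by differentiating \<open>S \<cdot> (1/S) = 1\<close>.\<close>
lemma fdt_inverse [simp]:
  assumes "regular_series S" "\<forall>t c. (t, c) \<in> U \<longrightarrow> fps_nth (S t c) 0 \<noteq> 0" "(t, c) \<in> U"
  shows "fdt (\<lambda>t c. inverse (S t c)) t c = - fdt S t c * inverse (S t c) ^ 2"
proof -
  define x where "x = fdt (\<lambda>t c. inverse (S t c)) t c"
  have "fdt (\<lambda>t c. S t c * inverse (S t c)) t c = fdt (\<lambda>t c. 1) t c"
    by (rule fdt_congI) (use assms in \<open>auto intro: inverse_mult_eq_1'\<close>)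
  then have "fdt S t c * inverse (S t c) + S t c * x = 0"
    using assms by (simp add: x_def)
  then have Sx: "S t c * x = - (fdt S t c * inverse (S t c))"
    by (simp add: eq_neg_iff_add_eq_0 add.commute)
  have inv: "inverse (S t c) * S t c = 1"
    using assms by (auto intro: inverse_mult_eq_1)
  have "x = inverse (S t c) * (S t c * x)"
    by (simp add: mult.assoc[symmetric] inv)
  also have "\<dots> = - fdt S t c * inverse (S t c) ^ 2"
    unfolding Sx by (simp add: power2_eq_square mult_ac)
  finally show ?thesis unfolding x_def .
qed

lemma fdt_power [simp]:
  assumes "regular_series S" "(t, c) \<in> U"
  shows "fdt (\<lambda>t c. S t c ^ n) t c = of_nat n * S t c ^ (n - 1) * fdt S t c"
proof (induction n)
  case (Suc n)
  have "fdt (\<lambda>t c. S t c ^ Suc n) t c = fdt S t c * S t c ^ n + S t c * (of_nat n * S t c ^ (n - 1) * fdt S t c)"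
    using assms Suc by simp
  also have "\<dots> = of_nat (Suc n) * S t c ^ n * fdt S t c"
    by (cases n) (simp_all add: algebra_simps)
  finally show ?case by simp
qed simp

text \<open>The operator \<open>\<eta>\<^sup>-\<^sup>1 d/dt\<close>, in which both formal systems of the theorem are written.\<close>
definition Xdt :: "(complex \<Rightarrow> complex \<Rightarrow> complex fps) \<Rightarrow> complex \<Rightarrow> complex \<Rightarrow> complex fps" where
  "Xdt S t c = fps_X * fdt S t c"

text \<open>The coefficient of order \<open>j + 1\<close> of \<open>\<eta>\<^sup>-\<^sup>1 dS/dt\<close> is \<open>dS\<^sub>j/dt\<close>; this turns the formal
  equations into recursions for the coefficients.\<close>
lemma Xdt_nth_Suc: "fps_nth (Xdt S t c) (Suc j) = Dt (\<lambda>t c. fps_nth (S t c) j) t c"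
  by (simp add: Xdt_def fdt_nth)

lemma regular_series_Xdt [simp]: "regular_series S \<Longrightarrow> regular_series (Xdt S)"
  unfolding Xdt_def[abs_def] by simp

lemma Xdt_congI:
  "(\<And>t c. (t, c) \<in> U \<Longrightarrow> S t c = T t c) \<Longrightarrow> (t, c) \<in> U \<Longrightarrow> Xdt S t c = Xdt T t c"
  unfolding Xdt_def using fdt_congI by metis

lemma Xdt_add [simp]: "regular_series S \<Longrightarrow> regular_series T \<Longrightarrow> (t, c) \<in> U \<Longrightarrow>
    Xdt (\<lambda>t c. S t c + T t c) t c = Xdt S t c + Xdt T t c"
  and Xdt_diff [simp]: "regular_series S \<Longrightarrow> regular_series T \<Longrightarrow> (t, c) \<in> U \<Longrightarrow>
    Xdt (\<lambda>t c. S t c - T t c) t c = Xdt S t c - Xdt T t c"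
  and Xdt_minus [simp]: "regular_series S \<Longrightarrow> (t, c) \<in> U \<Longrightarrow> Xdt (\<lambda>t c. - S t c) t c = - Xdt S t c"
  and Xdt_mult [simp]: "regular_series S \<Longrightarrow> regular_series T \<Longrightarrow> (t, c) \<in> U \<Longrightarrow>
    Xdt (\<lambda>t c. S t c * T t c) t c = Xdt S t c * T t c + S t c * Xdt T t c"
  and Xdt_power [simp]: "regular_series S \<Longrightarrow> (t, c) \<in> U \<Longrightarrow>
    Xdt (\<lambda>t c. S t c ^ n) t c = of_nat n * S t c ^ (n - 1) * Xdt S t c"
  and Xdt_inverse [simp]: "regular_series S \<Longrightarrow> \<forall>t c. (t, c) \<in> U \<longrightarrow> fps_nth (S t c) 0 \<noteq> 0 \<Longrightarrow>
    (t, c) \<in> U \<Longrightarrow> Xdt (\<lambda>t c. inverse (S t c)) t c = - Xdt S t c * inverse (S t c) ^ 2"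
  and Xdt_fps_const [simp]: "regular f \<Longrightarrow> (t, c) \<in> U \<Longrightarrow>
    Xdt (\<lambda>t c. fps_const (f t c)) t c = fps_X * fps_const (Dt f t c)"
  and Xdt_c_only [simp]: "Xdt (\<lambda>t c. F c) t c = 0"
  by (simp_all add: Xdt_def algebra_simps)

section \<open>The substitution \<open>c \<mapsto> c - \<eta>\<^sup>-\<^sup>1\<close>\<close>

definition DcN :: "nat \<Rightarrow> (complex \<Rightarrow> complex \<Rightarrow> complex) \<Rightarrow> complex \<Rightarrow> complex \<Rightarrow> complex" where
  "DcN m f = (\<lambda>t c. (deriv ^^ m) (\<lambda>d. f t d) c)"

lemma DcN_0 [simp]: "DcN 0 f = f"
  by (simp add: DcN_def)

lemma DcN_Suc: "DcN (Suc m) f = Dc (DcN m f)"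
  by (simp add: DcN_def Dc_def)

lemma regular_DcN [simp]: "regular f \<Longrightarrow> regular (DcN m f)"
  by (induction m) (simp_all add: DcN_Suc)

lemma DcN_congI:
  "(\<And>t c. (t, c) \<in> U \<Longrightarrow> f t c = g t c) \<Longrightarrow> (t, c) \<in> U \<Longrightarrow> DcN m f t c = DcN m g t c"
  unfolding DcN_def by (rule higher_deriv_cong_ev) (auto elim!: eventually_mono[OF eventually_U_c])

lemma DcN_add:
  "regular f \<Longrightarrow> regular g \<Longrightarrow> (t, c) \<in> U \<Longrightarrow> DcN m (\<lambda>t c. f t c + g t c) t c = DcN m f t c + DcN m g t c"
proof (induction m arbitrary: t c)
  case (Suc m)
  have "DcN (Suc m) (\<lambda>t c. f t c + g t c) t c = Dc (\<lambda>t c. DcN m f t c + DcN m g t c) t c"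
    unfolding DcN_Suc by (rule Dc_congI) (use Suc in auto)
  then show ?case using Suc by (simp add: DcN_Suc)
qed simp

text \<open>Higher \<open>c\<close>-derivatives commute with \<open>\<partial>\<^sub>t\<close>, by Schwarz's theorem.\<close>
lemma DcN_Dt: "regular f \<Longrightarrow> (t, c) \<in> U \<Longrightarrow> DcN m (Dt f) t c = Dt (DcN m f) t c"
proof (induction m arbitrary: t c)
  case (Suc m)
  have "DcN (Suc m) (Dt f) t c = Dc (Dt (DcN m f)) t c"
    unfolding DcN_Suc by (rule Dc_congI) (use Suc in auto)
  also have "\<dots> = Dt (Dc (DcN m f)) t c"
    using regular_partials_commute[of "DcN m f" t c] Suc by simp
  finally show ?case by (simp add: DcN_Suc)
qed simp

lemma DcN_zero [simp]: "DcN m (\<lambda>t c. 0) = (\<lambda>t c. 0)"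
  by (induction m) (simp_all add: DcN_Suc Dc_def)

lemma DcN_t_only: "DcN (Suc m) (\<lambda>t c. F t) = (\<lambda>t c. 0)"
  by (induction m) (simp_all add: DcN_Suc Dc_def)

lemma DcN_var_c: "DcN (Suc 0) (\<lambda>t c. c) = (\<lambda>t c. 1)" "DcN (Suc (Suc m)) (\<lambda>t c. c) = (\<lambda>t c. 0)"
proof -
  show one: "DcN (Suc 0) (\<lambda>t c. c) = (\<lambda>t c. 1)" by (simp add: DcN_Suc Dc_def)
  show "DcN (Suc (Suc m)) (\<lambda>t c. c) = (\<lambda>t c. 0)"
    by (induction m) (simp_all add: DcN_Suc[of "Suc _"] DcN_Suc[of 0] one Dc_def)
qed

definition Dcf :: "(complex \<Rightarrow> complex \<Rightarrow> complex fps) \<Rightarrow> complex \<Rightarrow> complex \<Rightarrow> complex fps" where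
  "Dcf S = (\<lambda>t c. Abs_fps (\<lambda>n. Dc (\<lambda>t c. fps_nth (S t c) n) t c))"

lemma Dcf_nth: "fps_nth (Dcf S t c) n = Dc (\<lambda>t c. fps_nth (S t c) n) t c"
  by (simp add: Dcf_def)

lemma Dcf_power_nth: "fps_nth ((Dcf ^^ m) S t c) n = DcN m (\<lambda>t c. fps_nth (S t c) n) t c"
proof -
  have "(\<lambda>t c. fps_nth ((Dcf ^^ m) S t c) n) = DcN m (\<lambda>t c. fps_nth (S t c) n)"
    by (induction m) (simp_all add: Dcf_nth DcN_Suc)
  then show ?thesis by metis
qed

lemma regular_series_Dcf_power [simp]: "regular_series S \<Longrightarrow> regular_series ((Dcf ^^ m) S)"
  by (rule regular_seriesI) (simp add: Dcf_power_nth[abs_def])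

lemma Dcf_congI:
  "(\<And>t c. (t, c) \<in> U \<Longrightarrow> S t c = T t c) \<Longrightarrow> (t, c) \<in> U \<Longrightarrow> Dcf S t c = Dcf T t c"
  unfolding fps_eq_iff Dcf_nth by (auto intro!: Dc_congI)

lemma Dcf_sum: "finite A \<Longrightarrow> (\<And>i. i \<in> A \<Longrightarrow> regular_series (F i)) \<Longrightarrow> (t, c) \<in> U \<Longrightarrow>
    Dcf (\<lambda>t c. \<Sum>i\<in>A. F i t c) t c = (\<Sum>i\<in>A. Dcf (F i) t c)"
  and Dcf_const: "Dcf (\<lambda>t c. K) t c = 0"
  and Dcf_mult: "regular_series S \<Longrightarrow> regular_series T \<Longrightarrow> (t, c) \<in> U \<Longrightarrow>
    Dcf (\<lambda>t c. S t c * T t c) t c = Dcf S t c * T t c + S t c * Dcf T t c"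
  by (simp_all add: fps_eq_iff Dcf_nth fps_sum_nth fps_mult_nth sum.distrib)

lemma Dcf_power_mult:
  assumes "regular_series S" "regular_series T" "(t, c) \<in> U"
  shows "(Dcf ^^ m) (\<lambda>t c. S t c * T t c) t c =
     (\<Sum>a\<le>m. of_nat (m choose a) * ((Dcf ^^ a) S t c * (Dcf ^^ (m - a)) T t c))"
  using assms(3)
proof (induction m arbitrary: t c)
  case (Suc m)
  have "(Dcf ^^ Suc m) (\<lambda>t c. S t c * T t c) t c =
      Dcf (\<lambda>t c. \<Sum>a\<le>m. of_nat (m choose a) * ((Dcf ^^ a) S t c * (Dcf ^^ (m - a)) T t c)) t c"
    by (simp, rule Dcf_congI) (use Suc in auto)
  also have "\<dots> = (\<Sum>a\<le>m. of_nat (m choose a) * ((Dcf ^^ Suc a) S t c * (Dcf ^^ (m - a)) T t c +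
        (Dcf ^^ a) S t c * (Dcf ^^ Suc (m - a)) T t c))"
    using assms Suc by (simp add: Dcf_sum Dcf_mult Dcf_const algebra_simps)
  also have "\<dots> = (\<Sum>a\<le>Suc m. of_nat (Suc m choose a) * ((Dcf ^^ a) S t c * (Dcf ^^ (Suc m - a)) T t c))"
    using leibniz_pascal_step[of m "\<lambda>a. (Dcf ^^ a) S t c" "\<lambda>b. (Dcf ^^ b) T t c"] by simp
  finally show ?case .
qed simp

lemma cshift_nth:
  "fps_nth (cshift S t c) k = (\<Sum>m\<le>k. shift_coeff m * fps_nth ((Dcf ^^ m) S t c) (k - m))"
  by (simp add: cshift_def shift_coeff_def Dcf_power_nth DcN_def)

lemma cshift_nth_DcN:
  "fps_nth (cshift S t c) k = (\<Sum>m\<le>k. shift_coeff m * DcN m (\<lambda>t c. fps_nth (S t c) (k - m)) t c)"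
  by (simp add: cshift_nth Dcf_power_nth)

lemma cshift_nth_0 [simp]: "fps_nth (cshift S t c) 0 = fps_nth (S t c) 0"
  by (simp add: cshift_nth_DcN shift_coeff_def)

definition shift_term :: "(complex \<Rightarrow> complex \<Rightarrow> complex fps) \<Rightarrow> nat \<Rightarrow> complex \<Rightarrow> complex \<Rightarrow> complex fps" where
  "shift_term S m t c = fps_const (shift_coeff m) * (fps_X ^ m * (Dcf ^^ m) S t c)"

lemma shift_term_sum_nth:
  assumes "k \<le> N"
  shows "fps_nth (\<Sum>m\<le>N. shift_term S m t c) k = fps_nth (cshift S t c) k"
proof -
  have "fps_nth (\<Sum>m\<le>N. shift_term S m t c) k =
      (\<Sum>m\<le>N. shift_coeff m * (if k < m then 0 else fps_nth ((Dcf ^^ m) S t c) (k - m)))"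
    by (simp add: shift_term_def fps_sum_nth fps_X_power_mult_nth)
  also have "\<dots> = (\<Sum>m\<le>k. shift_coeff m * fps_nth ((Dcf ^^ m) S t c) (k - m))"
    using assms by (intro sum.mono_neutral_cong_right) auto
  finally show ?thesis by (simp add: cshift_nth)
qed

text \<open>Leibniz rule plus \<open>shift_coeff_binomial\<close>: the Taylor terms of a product are the
  Cauchy products of the Taylor terms of the factors.\<close>
lemma shift_term_mult:
  assumes "regular_series S" "regular_series T" "(t, c) \<in> U"
  shows "shift_term (\<lambda>t c. S t c * T t c) m t c = (\<Sum>a\<le>m. shift_term S a t c * shift_term T (m - a) t c)"
proof -
  have "shift_term (\<lambda>t c. S t c * T t c) m t c = (\<Sum>a\<le>m. fps_const (shift_coeff m * of_nat (m choose a)) *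
      (fps_X ^ m * ((Dcf ^^ a) S t c * (Dcf ^^ (m - a)) T t c)))"
    unfolding shift_term_def Dcf_power_mult[OF assms]
    by (simp add: sum_distrib_left fps_of_nat[symmetric] fps_const_mult[symmetric] mult_ac
        del: fps_const_mult)
  also have "\<dots> = (\<Sum>a\<le>m. shift_term S a t c * shift_term T (m - a) t c)"
  proof (intro sum.cong refl)
    fix a assume "a \<in> {..m}"
    then have "fps_X ^ m = fps_X ^ a * (fps_X ^ (m - a) :: complex fps)"
      by (simp add: power_add[symmetric])
    with \<open>a \<in> {..m}\<close> show "fps_const (shift_coeff m * of_nat (m choose a)) *
        (fps_X ^ m * ((Dcf ^^ a) S t c * (Dcf ^^ (m - a)) T t c)) =
        shift_term S a t c * shift_term T (m - a) t c"
      by (simp only: shift_term_def shift_coeff_binomial atMost_iff fps_const_mult[symmetric] mult_ac)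
  qed
  finally show ?thesis .
qed

lemma cshift_mult:
  assumes "regular_series S" "regular_series T" "(t, c) \<in> U"
  shows "cshift (\<lambda>t c. S t c * T t c) t c = cshift S t c * cshift T t c"
proof (rule fps_ext)
  fix k
  define g where "g a b = shift_term S a t c * shift_term T b t c" for a b
  have low: "a + b \<le> k" if "fps_nth (g a b) k \<noteq> 0" for a b
  proof (rule ccontr)
    assume "\<not> a + b \<le> k"
    moreover have "g a b = fps_X ^ (a + b) *
        (fps_const (shift_coeff a * shift_coeff b) * ((Dcf ^^ a) S t c * (Dcf ^^ b) T t c))"
      by (simp add: g_def shift_term_def power_add mult_ac)
    ultimately show False using that by (simp add: fps_X_power_mult_nth)
  qed
  have "fps_nth (cshift (\<lambda>t c. S t c * T t c) t c) k =
      fps_nth (\<Sum>m\<le>k. shift_term (\<lambda>t c. S t c * T t c) m t c) k"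
    by (rule shift_term_sum_nth[symmetric]) simp
  also have "\<dots> = fps_nth (\<Sum>m\<le>k. \<Sum>a\<le>m. g a (m - a)) k"
    by (simp add: shift_term_mult[OF assms] g_def)
  also have "\<dots> = (\<Sum>m\<le>k. \<Sum>a\<le>m. fps_nth (g a (m - a)) k)"
    by (simp add: fps_sum_nth)
  also have "\<dots> = (\<Sum>(a, b)\<in>{(a, b). a + b \<le> k}. fps_nth (g a b) k)"
    by (rule sum.triangle_reindex_eq[symmetric])
  also have "\<dots> = (\<Sum>(a, b)\<in>{..k} \<times> {..k}. fps_nth (g a b) k)"
    by (intro sum.mono_neutral_left) (auto intro: low)
  also have "\<dots> = fps_nth ((\<Sum>a\<le>k. shift_term S a t c) * (\<Sum>b\<le>k. shift_term T b t c)) k"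
    by (simp add: g_def sum_product sum.cartesian_product fps_sum_nth case_prod_unfold)
  also have "\<dots> = fps_nth (cshift S t c * cshift T t c) k"
    unfolding fps_mult_nth by (intro sum.cong refl) (simp add: shift_term_sum_nth)
  finally show "fps_nth (cshift (\<lambda>t c. S t c * T t c) t c) k = fps_nth (cshift S t c * cshift T t c) k" .
qed

lemma cshift_congI:
  "(\<And>t c. (t, c) \<in> U \<Longrightarrow> S t c = T t c) \<Longrightarrow> (t, c) \<in> U \<Longrightarrow> cshift S t c = cshift T t c"
  unfolding fps_eq_iff cshift_nth_DcN by (auto intro!: sum.cong DcN_congI)

lemma cshift_add: "regular_series S \<Longrightarrow> regular_series T \<Longrightarrow> (t, c) \<in> U \<Longrightarrow>
    cshift (\<lambda>t c. S t c + T t c) t c = cshift S t c + cshift T t c"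
  by (simp add: fps_eq_iff cshift_nth_DcN DcN_add sum.distrib distrib_left)

lemma cshift_t_only: "cshift (\<lambda>t c. F t) t c = F t"
proof (rule fps_ext)
  fix k
  have "fps_nth (cshift (\<lambda>t c. F t) t c) k = (\<Sum>m\<in>{0}. shift_coeff m * DcN m (\<lambda>t c. fps_nth (F t) (k - m)) t c)"
    unfolding cshift_nth_DcN
    by (intro sum.mono_neutral_right) (auto simp: gr0_conv_Suc DcN_t_only)
  then show "fps_nth (cshift (\<lambda>t c. F t) t c) k = fps_nth (F t) k"
    by (simp add: shift_coeff_def)
qed

lemma cshift_power: "regular_series S \<Longrightarrow> (t, c) \<in> U \<Longrightarrow> cshift (\<lambda>t c. S t c ^ n) t c = cshift S t c ^ n"
proof (induction n)
  case 0 then show ?case using cshift_t_only[of "\<lambda>t. 1"] by simp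
next
  case (Suc n)
  then show ?case using cshift_mult[of S "\<lambda>t c. S t c ^ n" t c] by simp
qed

lemma cshift_var_c: "cshift (\<lambda>t c. fps_const c) t c = fps_const c - fps_X"
proof (rule fps_ext)
  fix k
  have "fps_nth (cshift (\<lambda>t c. fps_const c) t c) k = (\<Sum>m\<in>{k}. shift_coeff m * DcN m (\<lambda>t c. c) t c)"
    unfolding cshift_nth_DcN
    by (intro sum.mono_neutral_cong_right) (auto simp: DcN_var_c)
  also have "\<dots> = fps_nth (fps_const c - fps_X) k"
  proof (cases k)
    case (Suc j)
    then show ?thesis by (cases j) (simp_all add: shift_coeff_def DcN_var_c)
  qed (simp add: shift_coeff_def)
  finally show "fps_nth (cshift (\<lambda>t c. fps_const c) t c) k = fps_nth (fps_const c - fps_X) k" .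
qed

lemma cshift_fdt:
  assumes "regular_series S" "(t, c) \<in> U"
  shows "cshift (fdt S) t c = fdt (cshift S) t c"
proof (rule fps_ext)
  fix k
  have "fps_nth (cshift (fdt S) t c) k = (\<Sum>m\<le>k. shift_coeff m * Dt (DcN m (\<lambda>t c. fps_nth (S t c) (k - m))) t c)"
    using assms by (simp add: cshift_nth_DcN fdt_nth[abs_def] DcN_Dt)
  also have "\<dots> = fps_nth (fdt (cshift S) t c) k"
    using assms by (simp add: fdt_nth cshift_nth_DcN[abs_def])
  finally show "fps_nth (cshift (fdt S) t c) k = fps_nth (fdt (cshift S) t c) k" .
qed

lemma cshift_Xdt:
  assumes "regular_series S" "(t, c) \<in> U"
  shows "cshift (Xdt S) t c = Xdt (cshift S) t c"
proof -
  have "cshift (Xdt S) t c = cshift (\<lambda>t c. fps_X) t c * cshift (fdt S) t c"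
    unfolding Xdt_def[abs_def] using assms by (intro cshift_mult) auto
  then show ?thesis using assms by (simp add: cshift_t_only cshift_fdt Xdt_def)
qed

section \<open>Uniqueness of formal solutions\<close>

text \<open>A formal solution of \<open>\<eta>\<^sup>-\<^sup>1 L' = N\<close>, \<open>\<eta>\<^sup>-\<^sup>1 N' = 2L\<^sup>3 + tL + K\<close> with \<open>L\<^sub>0 = \<lambda>\<^sub>0\<close> is
  determined by \<open>N\<^sub>0\<close>: at order \<open>j + 1\<close> the system reads \<open>N\<^sub>j\<^sub>+\<^sub>1 = \<partial>\<^sub>tL\<^sub>j\<close> and
  \<open>\<Delta> L\<^sub>j\<^sub>+\<^sub>1 = \<partial>\<^sub>tN\<^sub>j - (terms of lower order)\<close>, and \<open>\<Delta> \<noteq> 0\<close>.\<close>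
context
  fixes L N L' N' K :: "complex \<Rightarrow> complex \<Rightarrow> complex fps"
  assumes L_0: "\<And>t c. (t, c) \<in> U \<Longrightarrow> fps_nth (L t c) 0 = l0 t c"
    and L'_0: "\<And>t c. (t, c) \<in> U \<Longrightarrow> fps_nth (L' t c) 0 = l0 t c"
    and N_0: "\<And>t c. (t, c) \<in> U \<Longrightarrow> fps_nth (N t c) 0 = fps_nth (N' t c) 0"
    and L_eq: "\<And>t c. (t, c) \<in> U \<Longrightarrow> Xdt L t c = N t c"
    and L'_eq: "\<And>t c. (t, c) \<in> U \<Longrightarrow> Xdt L' t c = N' t c"
    and N_eq: "\<And>t c. (t, c) \<in> U \<Longrightarrow> Xdt N t c = fps_const 2 * L t c ^ 3 + fps_const t * L t c + K t c"
    and N'_eq: "\<And>t c. (t, c) \<in> U \<Longrightarrow> Xdt N' t c = fps_const 2 * L' t c ^ 3 + fps_const t * L' t c + K t c"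
begin

lemma painleve_system_step:
  assumes agree: "\<And>t c. (t, c) \<in> U \<Longrightarrow>
      \<forall>i\<le>j. fps_nth (L t c) i = fps_nth (L' t c) i \<and> fps_nth (N t c) i = fps_nth (N' t c) i"
    and tc: "(t, c) \<in> U"
  shows "fps_nth (L t c) (Suc j) = fps_nth (L' t c) (Suc j) \<and> fps_nth (N t c) (Suc j) = fps_nth (N' t c) (Suc j)"
proof
  have "Dt (\<lambda>t c. fps_nth (N t c) j) t c = Dt (\<lambda>t c. fps_nth (N' t c) j) t c"
    by (rule Dt_congI) (use agree tc in simp_all)
  then have "2 * fps_nth (L t c ^ 3) (Suc j) + t * fps_nth (L t c) (Suc j) =
      2 * fps_nth (L' t c ^ 3) (Suc j) + t * fps_nth (L' t c) (Suc j)"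
    using arg_cong[OF N_eq[OF tc], of "\<lambda>S. fps_nth S (Suc j)"]
      arg_cong[OF N'_eq[OF tc], of "\<lambda>S. fps_nth S (Suc j)"]
    by (simp add: Xdt_nth_Suc)
  moreover have "fps_nth (L t c ^ 3) (Suc j) - fps_nth (L' t c ^ 3) (Suc j) =
      3 * l0 t c ^ 2 * (fps_nth (L t c) (Suc j) - fps_nth (L' t c) (Suc j))"
    using fps_cube_nth_diff[of j "L t c" "L' t c"] agree tc L_0 by simp
  ultimately have "Delta t c * (fps_nth (L t c) (Suc j) - fps_nth (L' t c) (Suc j)) = 0"
    unfolding Delta_def by algebra
  then show "fps_nth (L t c) (Suc j) = fps_nth (L' t c) (Suc j)" using tc by simp
  have "Dt (\<lambda>t c. fps_nth (L t c) j) t c = Dt (\<lambda>t c. fps_nth (L' t c) j) t c"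
    by (rule Dt_congI) (use agree tc in simp_all)
  then show "fps_nth (N t c) (Suc j) = fps_nth (N' t c) (Suc j)"
    using L_eq[OF tc] L'_eq[OF tc] by (metis Xdt_nth_Suc)
qed

lemma painleve_system_unique:
  assumes "(t, c) \<in> U"
  shows "L t c = L' t c \<and> N t c = N' t c"
proof -
  have "\<forall>i\<le>k. fps_nth (L t c) i = fps_nth (L' t c) i \<and> fps_nth (N t c) i = fps_nth (N' t c) i"
    if "(t, c) \<in> U" for k t c
    using that
  proof (induction k arbitrary: t c)
    case 0
    then show ?case using L_0 L'_0 N_0 by simp
  next
    case (Suc j)
    then show ?case using painleve_system_step[of j t c] by (auto simp: le_Suc_eq)
  qed
  then show ?thesis using assms by (auto simp: fps_eq_iff)
qed

end

text \<open>Likewise a formal solution of the Riccati equation \<open>R\<^sup>2 + \<eta>\<^sup>-\<^sup>1 R' = F\<close> with \<open>R\<^sub>0 = \<surd>\<Delta>\<close> is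
  unique: at order \<open>j + 1\<close> the unknown coefficient enters as \<open>2\<surd>\<Delta> R\<^sub>j\<^sub>+\<^sub>1\<close>.\<close>
context
  fixes R R' F :: "complex \<Rightarrow> complex \<Rightarrow> complex fps"
  assumes R_0: "\<And>t c. (t, c) \<in> U \<Longrightarrow> fps_nth (R t c) 0 = sq t c"
    and R'_0: "\<And>t c. (t, c) \<in> U \<Longrightarrow> fps_nth (R' t c) 0 = sq t c"
    and R_eq: "\<And>t c. (t, c) \<in> U \<Longrightarrow> R t c ^ 2 + Xdt R t c = F t c"
    and R'_eq: "\<And>t c. (t, c) \<in> U \<Longrightarrow> R' t c ^ 2 + Xdt R' t c = F t c"
begin

lemma riccati_step:
  assumes agree: "\<And>t c. (t, c) \<in> U \<Longrightarrow> \<forall>i\<le>j. fps_nth (R t c) i = fps_nth (R' t c) i"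
    and tc: "(t, c) \<in> U"
  shows "fps_nth (R t c) (Suc j) = fps_nth (R' t c) (Suc j)"
proof -
  have "fps_nth (R t c ^ 2) (Suc j) + Dt (\<lambda>t c. fps_nth (R t c) j) t c =
      fps_nth (R' t c ^ 2) (Suc j) + Dt (\<lambda>t c. fps_nth (R' t c) j) t c"
    using arg_cong[OF R_eq[OF tc], of "\<lambda>S. fps_nth S (Suc j)"]
      arg_cong[OF R'_eq[OF tc], of "\<lambda>S. fps_nth S (Suc j)"]
    by (simp add: Xdt_nth_Suc)
  moreover have "Dt (\<lambda>t c. fps_nth (R t c) j) t c = Dt (\<lambda>t c. fps_nth (R' t c) j) t c"
    by (rule Dt_congI) (use agree tc in simp_all)
  ultimately have "fps_nth (R t c ^ 2) (Suc j) = fps_nth (R' t c ^ 2) (Suc j)"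
    by simp
  moreover have "fps_nth (R t c ^ 2) (Suc j) - fps_nth (R' t c ^ 2) (Suc j) =
      2 * sq t c * (fps_nth (R t c) (Suc j) - fps_nth (R' t c) (Suc j))"
    using fps_square_nth_diff[of j "R t c" "R' t c"] agree tc R_0 by simp
  ultimately show ?thesis using tc by simp
qed

lemma riccati_unique:
  assumes "(t, c) \<in> U"
  shows "R t c = R' t c"
proof -
  have "\<forall>i\<le>k. fps_nth (R t c) i = fps_nth (R' t c) i" if "(t, c) \<in> U" for k t c
    using that
  proof (induction k arbitrary: t c)
    case 0
    then show ?case using R_0 R'_0 by simp
  next
    case (Suc j)
    then show ?case using riccati_step[of j t c] by (auto simp: le_Suc_eq)
  qed
  then show ?thesis using assms by (auto simp: fps_eq_iff)
qed

end

end

locale PII_solution = cubic_branch +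
  fixes lam nu Rt :: "complex \<Rightarrow> complex \<Rightarrow> complex fps"
  assumes zero_param: "zero_param_solution U l0 lam nu"
    and riccati: "riccati_solution U sq lam Rt"
begin

lemma lam_nth_0 [simp]: "(t, c) \<in> U \<Longrightarrow> fps_nth (lam t c) 0 = l0 t c"
  and nu_nth_0 [simp]: "(t, c) \<in> U \<Longrightarrow> fps_nth (nu t c) 0 = 0"
  and Xdt_lam [simp]: "(t, c) \<in> U \<Longrightarrow> Xdt lam t c = nu t c"
  and Xdt_nu: "(t, c) \<in> U \<Longrightarrow> Xdt nu t c = fps_const 2 * lam t c ^ 3 + fps_const t * lam t c + fps_const c"
  using zero_param unfolding zero_param_solution_def Xdt_def by auto

lemma Rt_nth_0 [simp]: "(t, c) \<in> U \<Longrightarrow> fps_nth (Rt t c) 0 = sq t c"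
  and Rt_riccati: "(t, c) \<in> U \<Longrightarrow> Rt t c ^ 2 + Xdt Rt t c = fps_const 6 * lam t c ^ 2 + fps_const t"
  using riccati unfolding riccati_solution_def Xdt_def by auto

text \<open>By the coefficient recursions, all coefficients of \<open>\<lambda>\<^sup>(\<^sup>0\<^sup>)\<close>, \<open>\<nu>\<^sup>(\<^sup>0\<^sup>)\<close> and \<open>R\<close> are regular.
  The recursion for order \<open>k + 1\<close> involves the series truncated at order \<open>k\<close>.\<close>
lemma regular_lam_nu: "regular (\<lambda>t c. fps_nth (lam t c) k) \<and> regular (\<lambda>t c. fps_nth (nu t c) k)"
proof (induction k rule: less_induct)
  case (less n)
  show ?case
  proof (cases n)
    case 0
    show ?thesis unfolding 0
      by (intro conjI regular_cong[OF lam_nth_0] regular_cong[OF nu_nth_0]) auto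
  next
    case (Suc k)
    have IH: "regular (\<lambda>t c. fps_nth (lam t c) i)" "regular (\<lambda>t c. fps_nth (nu t c) i)" if "i \<le> k" for i
      using less Suc that by auto
    have trunc: "regular_series (\<lambda>t c. fps_cutoff (Suc k) (lam t c))"
    proof (rule regular_seriesI)
      fix n show "regular (\<lambda>t c. fps_nth (fps_cutoff (Suc k) (lam t c)) n)"
        by (cases "n \<le> k") (simp_all add: IH)
    qed
    have nu_Suc: "fps_nth (nu t c) (Suc k) = Dt (\<lambda>t c. fps_nth (lam t c) k) t c" if "(t, c) \<in> U" for t c
      using Xdt_lam[OF that] by (metis Xdt_nth_Suc)
    have lam_Suc: "fps_nth (lam t c) (Suc k) =
        (Dt (\<lambda>t c. fps_nth (nu t c) k) t c - 2 * fps_nth (fps_cutoff (Suc k) (lam t c) ^ 3) (Suc k)) / Delta t c"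
      if tc: "(t, c) \<in> U" for t c
    proof -
      have "Dt (\<lambda>t c. fps_nth (nu t c) k) t c = 2 * fps_nth (lam t c ^ 3) (Suc k) + t * fps_nth (lam t c) (Suc k)"
        using arg_cong[OF Xdt_nu[OF tc], of "\<lambda>S. fps_nth S (Suc k)"] by (simp add: Xdt_nth_Suc)
      moreover have "fps_nth (lam t c ^ 3) (Suc k) - fps_nth (fps_cutoff (Suc k) (lam t c) ^ 3) (Suc k) =
          3 * l0 t c ^ 2 * fps_nth (lam t c) (Suc k)"
        using fps_cube_nth_diff[of k "lam t c" "fps_cutoff (Suc k) (lam t c)"] tc by simp
      ultimately have "fps_nth (lam t c) (Suc k) * Delta t c =
          Dt (\<lambda>t c. fps_nth (nu t c) k) t c - 2 * fps_nth (fps_cutoff (Suc k) (lam t c) ^ 3) (Suc k)"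
        by (simp add: Delta_def algebra_simps)
      then show ?thesis using tc by (simp add: field_simps)
    qed
    show ?thesis unfolding Suc
      by (intro conjI regular_cong[OF lam_Suc] regular_cong[OF nu_Suc]) (use IH trunc in auto)
  qed
qed

lemma regular_series_lam [simp]: "regular_series lam"
  and regular_series_nu [simp]: "regular_series nu"
  using regular_lam_nu by (auto intro: regular_seriesI)

lemma regular_series_Rt [simp]: "regular_series Rt"
proof (rule regular_seriesI)
  fix n show "regular (\<lambda>t c. fps_nth (Rt t c) n)"
  proof (induction n rule: less_induct)
    case (less n)
    show ?case
    proof (cases n)
      case 0
      then show ?thesis by (auto intro: regular_cong[OF Rt_nth_0])
    next
      case (Suc k)
      have IH: "regular (\<lambda>t c. fps_nth (Rt t c) i)" if "i \<le> k" for i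
        using less Suc that by auto
      have trunc: "regular_series (\<lambda>t c. fps_cutoff (Suc k) (Rt t c))"
      proof (rule regular_seriesI)
        fix n show "regular (\<lambda>t c. fps_nth (fps_cutoff (Suc k) (Rt t c)) n)"
          by (cases "n \<le> k") (simp_all add: IH)
      qed
      have Rt_Suc: "fps_nth (Rt t c) (Suc k) = (6 * fps_nth (lam t c ^ 2) (Suc k) -
          Dt (\<lambda>t c. fps_nth (Rt t c) k) t c - fps_nth (fps_cutoff (Suc k) (Rt t c) ^ 2) (Suc k)) / (2 * sq t c)"
        if tc: "(t, c) \<in> U" for t c
      proof -
        have "fps_nth (Rt t c ^ 2) (Suc k) + Dt (\<lambda>t c. fps_nth (Rt t c) k) t c = 6 * fps_nth (lam t c ^ 2) (Suc k)"
          using arg_cong[OF Rt_riccati[OF tc], of "\<lambda>S. fps_nth S (Suc k)"] by (simp add: Xdt_nth_Suc)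
        moreover have "fps_nth (Rt t c ^ 2) (Suc k) - fps_nth (fps_cutoff (Suc k) (Rt t c) ^ 2) (Suc k) =
            2 * sq t c * fps_nth (Rt t c) (Suc k)"
          using fps_square_nth_diff[of k "Rt t c" "fps_cutoff (Suc k) (Rt t c)"] tc by simp
        ultimately show ?thesis
          using tc by (simp add: field_simps)
      qed
      show ?thesis unfolding Suc
        by (rule regular_cong[OF Rt_Suc]) (use IH trunc in auto)
    qed
  qed
qed

section \<open>Part (i): the Baecklund transformation shifts \<open>c\<close> by \<open>-\<eta>\<^sup>-\<^sup>1\<close>\<close>

text \<open>The denominator \<open>\<nu> - \<lambda>\<^sup>2 - t/2\<close> of the Baecklund transformation along the 0-parameter
  solution; its constant term \<open>-(\<lambda>\<^sub>0\<^sup>2 + t/2) = c/(2\<lambda>\<^sub>0)\<close> is nonzero because \<open>c \<noteq> 0\<close>.\<close>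
definition den :: "complex \<Rightarrow> complex \<Rightarrow> complex fps" where
  "den t c = bden t (lam t c) (nu t c)"

definition den_inv :: "complex \<Rightarrow> complex \<Rightarrow> complex fps" where
  "den_inv t c = inverse (den t c)"

lemma den_eq: "den t c = nu t c - lam t c ^ 2 - fps_const (t / 2)"
  by (simp add: den_def bden_def)

lemma regular_series_den [simp]: "regular_series den"
  unfolding den_eq[abs_def] by simp

lemma c_factor: "(t, c) \<in> U \<Longrightarrow> c = - 2 * l0 t c * (l0 t c ^ 2 + t / 2)"
  using l0_cubic[of t c] by (simp add: algebra_simps power2_eq_square power3_eq_cube eq_neg_iff_add_eq_0)

lemma den_constant_nonzero: "(t, c) \<in> U \<Longrightarrow> l0 t c ^ 2 + t / 2 \<noteq> 0"
  using c_factor c_nonzero by fastforce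

lemma den_nth_0: "(t, c) \<in> U \<Longrightarrow> fps_nth (den t c) 0 = - (l0 t c ^ 2 + t / 2)"
  by (simp add: den_eq power2_eq_square)

lemma den_nth_0_eq_0_iff [simp]: "(t, c) \<in> U \<Longrightarrow> fps_nth (den t c) 0 = 0 \<longleftrightarrow> False"
  by (simp only: den_nth_0 neg_equal_0_iff_equal den_constant_nonzero)

lemma regular_series_den_inv [simp]: "regular_series den_inv"
  unfolding den_inv_def[abs_def] by simp

lemma den_inv_nth_0: "(t, c) \<in> U \<Longrightarrow> fps_nth (den_inv t c) 0 = inverse (- (l0 t c ^ 2 + t / 2))"
  by (simp add: den_inv_def den_nth_0)

lemma den_den_inv: "(t, c) \<in> U \<Longrightarrow> (nu t c - lam t c ^ 2 - fps_const (t / 2)) * den_inv t c = 1"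
  unfolding den_inv_def den_eq[symmetric] by (simp add: inverse_mult_eq_1')

lemma two_fps: "(2::complex fps) = fps_const 2" and six_fps: "(6::complex fps) = fps_const 6"
  by (simp_all add: numeral_fps_const)

lemma fps_const_half: "fps_const (t::complex) = 2 * fps_const (t / 2)"
  and two_half: "2 * fps_const (1 / 2) = (1::complex fps)"
  by (simp_all add: two_fps)

text \<open>The equations of motion, written with \<open>t = 2 (t/2)\<close> so that they can be combined by
  ring normalisation.\<close>
lemma Xdt_nu' [simp]: "(t, c) \<in> U \<Longrightarrow>
    Xdt nu t c = 2 * lam t c ^ 3 + 2 * fps_const (t / 2) * lam t c + fps_const c"
  using Xdt_nu[of t c] by (simp add: two_fps)

lemma Xdt_Rt [simp]: "(t, c) \<in> U \<Longrightarrow>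
    Xdt Rt t c = 6 * lam t c ^ 2 + 2 * fps_const (t / 2) - Rt t c ^ 2"
  using Rt_riccati[of t c] by (simp add: two_fps six_fps algebra_simps)

lemma Xdt_den [simp]: "(t, c) \<in> U \<Longrightarrow> Xdt den t c = 2 * lam t c ^ 3 +
    2 * fps_const (t / 2) * lam t c + fps_const c - 2 * lam t c * nu t c - fps_X * fps_const (1 / 2)"
  unfolding den_eq[abs_def] by (simp add: algebra_simps)

lemma Xdt_den_inv [simp]: "(t, c) \<in> U \<Longrightarrow> Xdt den_inv t c = - Xdt den t c * den_inv t c ^ 2"
  unfolding den_inv_def[abs_def] by simp

definition backlund_lam :: "complex \<Rightarrow> complex \<Rightarrow> complex fps" where
  "backlund_lam t c = - lam t c + chalf c * den_inv t c"

definition backlund_nu :: "complex \<Rightarrow> complex \<Rightarrow> complex fps" where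
  "backlund_nu t c = - nu t c + 2 * chalf c * lam t c * den_inv t c - (chalf c * den_inv t c) ^ 2"

lemma regular_series_backlund [simp]: "regular_series backlund_lam" "regular_series backlund_nu"
  unfolding backlund_lam_def[abs_def] backlund_nu_def[abs_def] by simp_all

lemma BLambda_eq: "(t, c) \<in> U \<Longrightarrow> BLambda t c (lam t c) (nu t c) = backlund_lam t c"
  by (simp add: BLambda_def backlund_lam_def den_inv_def den_def[symmetric] fps_divide_unit)

lemma BN_eq: "(t, c) \<in> U \<Longrightarrow> BN t c (lam t c) (nu t c) = backlund_nu t c"
  by (simp add: BN_def backlund_nu_def den_inv_def den_def[symmetric] fps_divide_unit two_fps)

lemma backlund_nth_0:
  assumes "(t, c) \<in> U"
  shows "fps_nth (backlund_lam t c) 0 = l0 t c" "fps_nth (backlund_nu t c) 0 = 0"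
proof -
  have "x * inverse (- b) = 2 * l" if "b \<noteq> 0" "x = - 2 * l * b" for x b l :: complex
    using that by (simp add: field_simps)
  then have q: "c * inverse (- (l0 t c ^ 2 + t / 2)) = 2 * l0 t c"
    using c_factor[OF assms] den_constant_nonzero[OF assms] by blast
  show "fps_nth (backlund_lam t c) 0 = l0 t c"
    using assms q by (simp add: backlund_lam_def den_inv_nth_0 chalf_def)
  show "fps_nth (backlund_nu t c) 0 = 0"
    using assms q by (simp add: backlund_nu_def den_inv_nth_0 chalf_def power2_eq_square)
qed

lemma Xdt_backlund_lam:
  assumes tc: "(t, c) \<in> U"
  shows "Xdt backlund_lam t c = backlund_nu t c"
proof -
  have "Xdt backlund_lam t c = - nu t c + chalf c * (- (2 * lam t c ^ 3 + 2 * fps_const (t / 2) * lam t c +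
      fps_const c - 2 * lam t c * nu t c - fps_X * fps_const (1 / 2)) * den_inv t c ^ 2)"
    unfolding backlund_lam_def[abs_def] using tc by simp
  also have "\<dots> = backlund_nu t c"
    using den_den_inv[OF tc] unfolding backlund_nu_def chalf_def by algebra
  finally show ?thesis .
qed

lemma Xdt_backlund_nu:
  assumes tc: "(t, c) \<in> U"
  shows "Xdt backlund_nu t c =
    fps_const 2 * backlund_lam t c ^ 3 + fps_const t * backlund_lam t c + (fps_const c - fps_X)"
  \<comment> \<open>Expand by the differentiation rules; the rest is a polynomial identity modulo
      \<open>den \<cdot> den_inv = 1\<close>.\<close>
  unfolding backlund_nu_def[abs_def]
  by (simp add: tc, simp add: backlund_lam_def chalf_def,
      insert den_den_inv[OF tc] fps_const_half[of t] two_half two_fps, algebra)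

text \<open>Since \<open>cshift\<close> is a ring homomorphism commuting with \<open>\<eta>\<^sup>-\<^sup>1 d/dt\<close>, the shifted
  0-parameter solution solves the same shifted system.\<close>
lemma Xdt_cshift_lam: "(t, c) \<in> U \<Longrightarrow> Xdt (cshift lam) t c = cshift nu t c"
  using cshift_Xdt[of lam t c] cshift_congI[of "Xdt lam" nu t c] by simp

lemma Xdt_cshift_nu:
  assumes tc: "(t, c) \<in> U"
  shows "Xdt (cshift nu) t c =
    fps_const 2 * cshift lam t c ^ 3 + fps_const t * cshift lam t c + (fps_const c - fps_X)"
proof -
  have "Xdt (cshift nu) t c =
      cshift (\<lambda>t c. fps_const 2 * lam t c ^ 3 + fps_const t * lam t c + fps_const c) t c"
    using cshift_Xdt[of nu t c] cshift_congI[OF Xdt_nu] tc by simp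
  also have "\<dots> = fps_const 2 * cshift lam t c ^ 3 + fps_const t * cshift lam t c + (fps_const c - fps_X)"
    using tc by (simp add: cshift_add cshift_mult cshift_power cshift_t_only cshift_var_c)
  finally show ?thesis .
qed

theorem backlund_shift:
  assumes "(t, c) \<in> U"
  shows "backlund_lam t c = cshift lam t c \<and> backlund_nu t c = cshift nu t c"
proof (rule painleve_system_unique[where K = "\<lambda>t c. fps_const c - fps_X"])
  show "fps_nth (backlund_lam t c) 0 = l0 t c" "fps_nth (cshift lam t c) 0 = l0 t c"
    "fps_nth (backlund_nu t c) 0 = fps_nth (cshift nu t c) 0" if "(t, c) \<in> U" for t c
    using that by (simp_all add: backlund_nth_0)
qed (simp_all add: Xdt_backlund_lam Xdt_backlund_nu Xdt_cshift_lam Xdt_cshift_nu assms)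

section \<open>Part (ii): the shift of the Riccati solution\<close>

text \<open>\<open>\<Theta>\<close> is the argument of the logarithm in (ii) and \<open>\<Theta>\<^sub>1 = \<eta>\<^sup>-\<^sup>1 d\<Theta>/dt\<close>.\<close>
definition Theta :: "complex \<Rightarrow> complex \<Rightarrow> complex fps" where
  "Theta t c = 1 + chalf c * (Rt t c - 2 * lam t c) * den_inv t c ^ 2"

definition Theta1 :: "complex \<Rightarrow> complex \<Rightarrow> complex fps" where
  "Theta1 t c = chalf c * ((6 * lam t c ^ 2 + 2 * fps_const (t / 2) - Rt t c ^ 2 - 2 * nu t c) * den_inv t c ^ 2
     - 2 * (Rt t c - 2 * lam t c) * (2 * lam t c ^ 3 + 2 * fps_const (t / 2) * lam t c + fps_const c
            - 2 * lam t c * nu t c - fps_X * fps_const (1 / 2)) * den_inv t c ^ 3)"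

lemma regular_series_Theta [simp]: "regular_series Theta"
  unfolding Theta_def[abs_def] by simp

lemma regular_series_Theta1 [simp]: "regular_series Theta1"
  unfolding Theta1_def[abs_def] by simp

lemma Theta_nth_0_eq_0_iff [simp]:
  assumes "(t, c) \<in> U"
  shows "fps_nth (Theta t c) 0 = 0 \<longleftrightarrow> False"
proof -
  have "fps_nth (Theta t c) 0 = 1 + c * (sq t c - 2 * l0 t c) * inverse (- (l0 t c ^ 2 + t / 2)) ^ 2"
    using assms by (simp add: Theta_def den_inv_nth_0 chalf_def power2_eq_square)
  moreover have "\<dots> \<noteq> 0"
    by (rule log_arg_constant_nonzero)
       (use assms den_constant_nonzero c_factor sq_square in auto)
  ultimately show ?thesis by simp
qed

lemma Theta_inverse: "(t, c) \<in> U \<Longrightarrow> Theta t c * inverse (Theta t c) = 1"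
  by (rule inverse_mult_eq_1') simp

lemma logarg_eq:
  assumes "(t, c) \<in> U"
  shows "logarg Rt lam nu t c = Theta t c"
proof -
  have "fps_nth (den t c ^ 2) 0 \<noteq> 0" using assms by (simp add: power2_eq_square)
  then have "logarg Rt lam nu t c = 1 + chalf c * (Rt t c - 2 * lam t c) * inverse (den t c ^ 2)"
    by (simp add: logarg_def den_def[symmetric] fps_divide_unit two_fps)
  then show ?thesis by (simp add: Theta_def den_inv_def fps_inverse_power)
qed

lemma fdlog_logarg: "(t, c) \<in> U \<Longrightarrow> fdlog (logarg Rt lam nu) t c = fdt Theta t c * inverse (Theta t c)"
  using fdt_congI[OF logarg_eq] by (simp add: fdlog_def logarg_eq fps_divide_unit)

lemma Xdt_Theta [simp]: "(t, c) \<in> U \<Longrightarrow> Xdt Theta t c = Theta1 t c"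
  unfolding Theta_def[abs_def] by (simp add: Theta1_def) algebra

lemma Xdt_Xdt_Theta [simp]: "(t, c) \<in> U \<Longrightarrow> Xdt (Xdt Theta) t c = Xdt Theta1 t c"
  by (rule Xdt_congI) simp_all

text \<open>The key identity: \<open>\<Theta>\<close> solves the linearisation \<open>\<eta>\<^sup>-\<^sup>2\<Theta>'' + 2\<eta>\<^sup>-\<^sup>1R\<Theta>' = 6(\<Lambda>\<^sup>2 - \<lambda>\<^sup>2)\<Theta>\<close>
  of the Riccati equation around \<open>R\<close>; equivalently \<open>R + (log \<Theta>)'\<close> solves the Riccati
  equation with \<open>\<lambda>\<close> replaced by the Baecklund image \<open>\<Lambda>\<close>.\<close>
lemma Theta_linearised_riccati:
  assumes tc: "(t, c) \<in> U"
  shows "2 * Rt t c * Theta1 t c + Xdt Theta1 t c = 6 * (backlund_lam t c ^ 2 - lam t c ^ 2) * Theta t c"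
  unfolding Theta1_def[abs_def]
  by (simp add: tc, simp add: backlund_lam_def Theta_def chalf_def,
      insert den_den_inv[OF tc] two_half two_fps, algebra)

definition R_shifted :: "complex \<Rightarrow> complex \<Rightarrow> complex fps" where
  "R_shifted t c = Rt t c + Xdt Theta t c * inverse (Theta t c)"

lemma R_shifted_riccati:
  assumes tc: "(t, c) \<in> U"
  shows "R_shifted t c ^ 2 + Xdt R_shifted t c = fps_const 6 * backlund_lam t c ^ 2 + fps_const t"
proof -
  have "Xdt R_shifted t c = (6 * lam t c ^ 2 + 2 * fps_const (t / 2) - Rt t c ^ 2) +
      Xdt Theta1 t c * inverse (Theta t c) + Theta1 t c * (- Theta1 t c * inverse (Theta t c) ^ 2)"
    unfolding R_shifted_def[abs_def] using tc by simp
  moreover have "R_shifted t c = Rt t c + Theta1 t c * inverse (Theta t c)"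
    using tc by (simp add: R_shifted_def)
  ultimately show ?thesis
    using Theta_linearised_riccati[OF tc] Theta_inverse[OF tc] fps_const_half[of t] six_fps
    by algebra
qed

lemma cshift_Rt_riccati:
  assumes tc: "(t, c) \<in> U"
  shows "cshift Rt t c ^ 2 + Xdt (cshift Rt) t c = fps_const 6 * backlund_lam t c ^ 2 + fps_const t"
proof -
  have "cshift Rt t c ^ 2 + Xdt (cshift Rt) t c = cshift (\<lambda>t c. Rt t c ^ 2 + Xdt Rt t c) t c"
    using tc by (simp add: cshift_add cshift_power cshift_Xdt)
  also have "\<dots> = cshift (\<lambda>t c. fps_const 6 * lam t c ^ 2 + fps_const t) t c"
    using tc by (intro cshift_congI) (simp_all add: Rt_riccati del: Xdt_Rt)
  also have "\<dots> = fps_const 6 * cshift lam t c ^ 2 + fps_const t"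
    using tc by (simp add: cshift_add cshift_mult cshift_power cshift_t_only)
  finally show ?thesis using backlund_shift[OF tc] by simp
qed

theorem riccati_shift:
  assumes tc: "(t, c) \<in> U"
  shows "Rt t c - cshift Rt t c = - fps_X * fdlog (logarg Rt lam nu) t c"
proof -
  have "cshift Rt t c = R_shifted t c"
  proof (rule riccati_unique[OF _ _ _ _ tc])
    show "fps_nth (cshift Rt t c) 0 = sq t c" "fps_nth (R_shifted t c) 0 = sq t c"
      if "(t, c) \<in> U" for t c
      using that by (simp_all add: R_shifted_def Xdt_def del: Xdt_Theta)
  qed (simp_all add: cshift_Rt_riccati R_shifted_riccati)
  then show ?thesis
    using tc by (simp add: R_shifted_def fdlog_logarg Xdt_def mult.assoc)
qed

end

theorem mainTheorem5:
  fixes U :: "(complex \<times> complex) set"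
    and l0 sq :: "complex \<Rightarrow> complex \<Rightarrow> complex"
    and lam nu Rt :: "complex \<Rightarrow> complex \<Rightarrow> complex fps"
  assumes "open U"
    and "\<forall>(t, c)\<in>U. c \<noteq> 0"
    and "continuous_on U (\<lambda>(t, c). l0 t c)"
    and "\<forall>(t, c)\<in>U. (\<lambda>s. l0 s c) field_differentiable (at t) \<and>
                      (\<lambda>d. l0 t d) field_differentiable (at c)"
    and "\<forall>(t, c)\<in>U. 2 * l0 t c ^ 3 + t * l0 t c + c = 0"
    and "\<forall>(t, c)\<in>U. 6 * l0 t c ^ 2 + t \<noteq> 0"
    and "continuous_on U (\<lambda>(t, c). sq t c)"
    and "\<forall>(t, c)\<in>U. (\<lambda>s. sq s c) field_differentiable (at t) \<and>
                      (\<lambda>d. sq t d) field_differentiable (at c)"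
    and "\<forall>(t, c)\<in>U. sq t c ^ 2 = 6 * l0 t c ^ 2 + t"
    and "zero_param_solution U l0 lam nu"
    and "riccati_solution U sq lam Rt"
  shows "\<forall>(t, c)\<in>U.
           BLambda t c (lam t c) (nu t c) = cshift lam t c \<and>
           BN t c (lam t c) (nu t c) = cshift nu t c \<and>
           Rt t c - cshift Rt t c = - fps_X * fdlog (logarg Rt lam nu) t c"
proof -
  interpret PII_solution U l0 sq lam nu Rt
    using assms unfolding PII_solution_def PII_solution_axioms_def cubic_branch_def by auto
  show ?thesis
    using BLambda_eq BN_eq backlund_shift riccati_shift by auto
qed

end
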